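(* Let $G=(V,E)$ be a finite simple graph with maximum vertex degree $\Delta$, let $w\in(0,1)$ and let $M\subseteq E$. Suppose the even subgraph model on $G$ with measure $\lambda(A)=w^{|A\oplus M|}$ has $(\chi_2,\chi_4)$-bounded defect susceptibility, i.e. \[ \frac{\lambda(\mathcal C_2)}{\lambda(\mathcal C_0)}\le \chi_2,\qquad \frac{\lambda(\mathcal C_4)}{\lambda(\mathcal C_0)}\le \chi_4 . \] Then the relaxation time of the lazy worm process on $\mathcal W=\mathcal C_0\cup\mathcal C_2$ satisfies \[ t_{\rm rel}\le 8\,\Delta\, w^{-1}\,|E|\,\bigl[(1+\chi_2)(2+|V|)+2\chi_4\bigr]. \]
   Context: Subgraphs of $G$ are identified with edge subsets $A\subseteq E$; $\oplus$ denotes symmetric difference, $d(u)$ the degree of vertex $u$ in $G$, and $\partial A$ the set of vertices having odd degree in $(V,A)$. $\mathcal C_k=\{A\subseteq E: |\partial A|=k\}$, and for a set $\mathcal S$ of subgraphs $\lambda(\mathcal S)=\sum_{A\in\mathcal S}\lambda(A)$, where $\lambda(A)=w^{|A\oplus M|}$. The state space is $\mathcal W=\mathcal C_0\cup\mathcal C_2$, equipped with the Prokof'ev–Svistunov measure $\pi(A)=\Psi(A)\lambda(A)/(|V|\lambda(\mathcal C_0)+2\lambda(\mathcal C_2))$, where $\Psi(A)=|V|$ if $A\in\mathcal C_0$ and $\Psi(A)=2$ if $A\in\mathcal C_2$. The lazy worm process is the Markov chain on $\mathcal W$ whose transition matrix $P$ is as follows: for $A\in\mathcal W$ and an edge $e=uv\in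 E$ with $A\oplus e\in\mathcal W$, (i) if $A\in\mathcal C_0$: $P(A,A\oplus e)=w^{\mathbf 1[e\notin A\oplus M]}\frac{1}{2|V|}\bigl(\frac1{d(u)}+\frac1{d(v)}\bigr)$; (ii) if $A\in\mathcal C_2$ and $A\oplus e\in\mathcal C_0$: $P(A,A\oplus e)=w^{\mathbf 1[e\notin A\oplus M]}\frac14\bigl(\frac1{d(u)}+\frac1{d(v)}\bigr)$; (iii) if $A\in\mathcal C_2$, $A\oplus e\in\mathcal C_2$ and $u\in\partial A$: $P(A,A\oplus e)=\min\!\bigl(\frac{d(u)}{d(v)}w^{\mathbf 1[e\notin A\oplus M]-\mathbf 1[e\in A\oplus M]},1\bigr)\frac{1}{4d(u)}$; all other off-diagonal entries are $0$ and $P(A,A)=1-\sum_{B\neq A}P(A,B)$. The relaxation time is $t_{\rm rel}=1/\gamma_\ast$, where $\gamma_\ast=1-\max\{|\mu|:\mu\ne 1 \text{ an eigenvalue of } P\}$ is the absolute spectral gap of $P$. *)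

theory Defs
  imports Complex_Main
begin

definition simple_graph :: "'a set \<Rightarrow> 'a set set \<Rightarrow> bool" where
  "simple_graph V E \<longleftrightarrow> finite V \<and> (\<forall>e\<in>E. \<exists>u v. e = {u, v} \<and> u \<in> V \<and> v \<in> V \<and> u \<noteq> v)"

definition symdiff :: "'b set \<Rightarrow> 'b set \<Rightarrow> 'b set" where
  "symdiff A B = (A - B) \<union> (B - A)"

definition deg :: "'a set set \<Rightarrow> 'a \<Rightarrow> nat" where
  "deg A u = card {e \<in> A. u \<in> e}"

definition max_degree :: "'a set \<Rightarrow> 'a set set \<Rightarrow> nat" where
  "max_degree V E = Max (deg E ` V)"

definition bdry :: "'a set \<Rightarrow> 'a set set \<Rightarrow> 'a set" where
  "bdry V A = {u \<in> V. odd (deg A u)}"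

definition Ck :: "'a set \<Rightarrow> 'a set set \<Rightarrow> nat \<Rightarrow> 'a set set set" where
  "Ck V E k = {A. A \<subseteq> E \<and> card (bdry V A) = k}"

definition wt :: "real \<Rightarrow> 'a set set \<Rightarrow> 'a set set \<Rightarrow> real" where
  "wt w M A = w ^ card (symdiff A M)"

definition wtS :: "real \<Rightarrow> 'a set set \<Rightarrow> 'a set set set \<Rightarrow> real" where
  "wtS w M S = (\<Sum>A\<in>S. wt w M A)"

definition worm_space :: "'a set \<Rightarrow> 'a set set \<Rightarrow> 'a set set set" where
  "worm_space V E = Ck V E 0 \<union> Ck V E 2"

definition worm_off :: "'a set \<Rightarrow> 'a set set \<Rightarrow> real \<Rightarrow> 'a set set \<Rightarrow> 'a set set \<Rightarrow> 'a set set \<Rightarrow> real" where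
  "worm_off V E w M A B =
    (if A \<in> worm_space V E \<and> B \<in> worm_space V E \<and> (\<exists>e\<in>E. symdiff A B = {e}) then
      (let e = the_elem (symdiff A B);
           ind = (e \<notin> symdiff A M);
           fl = (if ind then w else 1)
       in if A \<in> Ck V E 0 then
            fl * (1 / (2 * real (card V))) * (\<Sum>x\<in>e. 1 / real (deg E x))
          else if B \<in> Ck V E 0 then
            fl * (1/4) * (\<Sum>x\<in>e. 1 / real (deg E x))
          else
            (let u = the_elem (e \<inter> bdry V A); v = the_elem (e - {u}) in
              min (real (deg E u) / real (deg E v) * (if ind then w else inverse w)) 1
                * (1 / (4 * real (deg E u)))))
     else 0)"

definition worm_P :: "'a set \<Rightarrow> 'a set set \<Rightarrow> real \<Rightarrow> 'a set set \<Rightarrow> 'a set set \<Rightarrow> 'a set set \<Rightarrow> real" where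
  "worm_P V E w M A B =
    (if A = B then 1 - (\<Sum>C\<in>worm_space V E - {A}. worm_off V E w M A C)
     else worm_off V E w M A B)"

definition is_eigenvalue :: "'s set \<Rightarrow> ('s \<Rightarrow> 's \<Rightarrow> real) \<Rightarrow> complex \<Rightarrow> bool" where
  "is_eigenvalue S P \<mu> \<longleftrightarrow>
    (\<exists>f :: 's \<Rightarrow> complex. (\<exists>x\<in>S. f x \<noteq> 0) \<and>
        (\<forall>x\<in>S. (\<Sum>y\<in>S. complex_of_real (P x y) * f y) = \<mu> * f x))"

definition abs_spectral_gap :: "'s set \<Rightarrow> ('s \<Rightarrow> 's \<Rightarrow> real) \<Rightarrow> real" where
  "abs_spectral_gap S P = 1 - Max {cmod \<mu> | \<mu>. is_eigenvalue S P \<mu> \<and> \<mu> \<noteq> 1}"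

definition relaxation_time :: "'s set \<Rightarrow> ('s \<Rightarrow> 's \<Rightarrow> real) \<Rightarrow> real" where
  "relaxation_time S P = 1 / abs_spectral_gap S P"

end

(*
  A lazy chain that is reversible with respect to pi has real eigenvalues in [0, 1]. If it
  satisfies a Poincare inequality Var_pi(g) <= B * Dirichlet(g), every eigenvalue of an
  eigenfunction orthogonal to the constants lies in [0, 1 - 1/B], so t_rel <= B.

  For the worm process B comes from canonical paths. Compare g(I), for I in W, with g(J) for J
  drawn from lambda restricted to C_0, and go from J to I by toggling the edges of I (+) J in an
  order that never creates more than two odd vertices; the path then stays in W and has at most
  |E| steps. For a step Z -> Z' of such a path, the complementary subgraph eta = I (+) J (+) Z
  lies in C_0, C_2 or C_4, satisfies lambda(I) lambda(J) = lambda(Z) lambda(eta), and together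
  with the step determines I, J and the position of the step. Hence the weight routed through
  Z -> Z' is at most lambda(Z) (|V| (lambda(C_0) + lambda(C_2)) + 2 lambda(C_4)) / lambda(C_0),
  while pi(Z) P(Z, Z') >= w lambda(Z) / (2 Delta). This gives
  B = 4 Delta |E| (|V| (lambda(C_0) + lambda(C_2)) + 2 lambda(C_4)) / (w lambda(C_0)).
*)

theory Submission
  imports Defs "Jordan_Normal_Form.Char_Poly" "HOL-Analysis.Convex"
begin

section \<open>Spectral gap of lazy reversible chains\<close>

locale reversible_lazy_chain =
  fixes S :: "'s set" and P :: "'s \<Rightarrow> 's \<Rightarrow> real" and \<pi> :: "'s \<Rightarrow> real"
  assumes finite_states: "finite S"
    and weight_pos: "x \<in> S \<Longrightarrow> 0 < \<pi> x"
    and row_sum: "x \<in> S \<Longrightarrow> (\<Sum>y\<in>S. P x y) = 1"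
    and off_diagonal_nonneg: "x \<in> S \<Longrightarrow> y \<in> S \<Longrightarrow> x \<noteq> y \<Longrightarrow> 0 \<le> P x y"
    and lazy: "x \<in> S \<Longrightarrow> 1/2 \<le> P x x"
    and reversible: "x \<in> S \<Longrightarrow> y \<in> S \<Longrightarrow> \<pi> x * P x y = \<pi> y * P y x"
begin

definition dirichlet_form :: "('s \<Rightarrow> real) \<Rightarrow> real" where
  "dirichlet_form g = (1/2) * (\<Sum>x\<in>S. \<Sum>y\<in>S. \<pi> x * P x y * (g x - g y)^2)"

definition poincare_inequality :: "real \<Rightarrow> bool" where
  "poincare_inequality B \<longleftrightarrow>
     (\<forall>g. (\<Sum>x\<in>S. \<pi> x * g x) = 0 \<longrightarrow> (\<Sum>x\<in>S. \<pi> x * (g x)^2) \<le> B * dirichlet_form g)"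

definition orthogonal_eigenvalues :: "complex set" where
  "orthogonal_eigenvalues =
     {\<mu>. \<exists>f. (\<exists>x\<in>S. f x \<noteq> 0) \<and> (\<Sum>x\<in>S. of_real (\<pi> x) * f x) = 0 \<and>
           (\<forall>x\<in>S. (\<Sum>y\<in>S. of_real (P x y) * f y) = \<mu> * f x)}"

lemma reversible_sum_swap:
  fixes F :: "'s \<Rightarrow> 's \<Rightarrow> 'b::real_algebra_1"
  shows "(\<Sum>x\<in>S. \<Sum>y\<in>S. of_real (\<pi> x * P x y) * F x y) = (\<Sum>x\<in>S. \<Sum>y\<in>S. of_real (\<pi> x * P x y) * F y x)"
proof -
  have "(\<Sum>x\<in>S. \<Sum>y\<in>S. of_real (\<pi> x * P x y) * F x y) = (\<Sum>x\<in>S. \<Sum>y\<in>S. of_real (\<pi> y * P y x) * F x y)"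
    by (intro sum.cong refl) (simp add: reversible)
  also have "\<dots> = (\<Sum>x\<in>S. \<Sum>y\<in>S. of_real (\<pi> x * P x y) * F y x)"
    by (rule sum.swap)
  finally show ?thesis .
qed

lemma stationary:
  "(\<Sum>x\<in>S. of_real (\<pi> x) * (\<Sum>y\<in>S. of_real (P x y) * f y)) = (\<Sum>x\<in>S. of_real (\<pi> x) * (f x :: complex))"
proof -
  have "(\<Sum>x\<in>S. of_real (\<pi> x) * (\<Sum>y\<in>S. of_real (P x y) * f y)) = (\<Sum>x\<in>S. \<Sum>y\<in>S. of_real (\<pi> x * P x y) * f y)"
    by (simp add: sum_distrib_left mult.assoc)
  also have "\<dots> = (\<Sum>x\<in>S. \<Sum>y\<in>S. of_real (\<pi> x * P x y) * f x)"
    by (rule reversible_sum_swap)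
  also have "\<dots> = (\<Sum>x\<in>S. of_real (\<pi> x) * f x * of_real (\<Sum>y\<in>S. P x y))"
    by (simp add: sum_distrib_left mult_ac)
  also have "\<dots> = (\<Sum>x\<in>S. of_real (\<pi> x) * f x)"
    by (simp add: row_sum)
  finally show ?thesis .
qed

lemma sum_transition_source:
  "(\<Sum>x\<in>S. \<Sum>y\<in>S. \<pi> x * P x y * F x) = (\<Sum>x\<in>S. \<pi> x * F x)"
  by (simp add: sum_distrib_left[symmetric] mult.commute[of _ "F _"] mult.assoc row_sum)

lemma sum_transition_target:
  "(\<Sum>x\<in>S. \<Sum>y\<in>S. \<pi> x * P x y * F y) = (\<Sum>x\<in>S. \<pi> x * F x)"
  using reversible_sum_swap[of "\<lambda>x y. F x"] by (simp add: sum_transition_source)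

lemma sum_transition_product:
  "(\<Sum>x\<in>S. \<Sum>y\<in>S. \<pi> x * P x y * (g x * g y)) = (\<Sum>x\<in>S. \<pi> x * g x * (\<Sum>y\<in>S. P x y * g y))"
  by (simp add: sum_distrib_left mult_ac)

lemma dirichlet_form_eq:
  "dirichlet_form g = (\<Sum>x\<in>S. \<pi> x * (g x)^2) - (\<Sum>x\<in>S. \<pi> x * g x * (\<Sum>y\<in>S. P x y * g y))"
proof -
  have "\<pi> x * P x y * (g x - g y)^2
      = \<pi> x * P x y * (g x)^2 + \<pi> x * P x y * (g y)^2 - 2 * (\<pi> x * P x y * (g x * g y))" for x y
    by (simp add: power2_eq_square algebra_simps)
  then show ?thesis
    unfolding dirichlet_form_def
    by (simp only: sum.distrib sum_subtractf sum_distrib_left[symmetric] sum_transition_source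
        sum_transition_target sum_transition_product) simp
qed

text \<open>Laziness makes the transition operator positive semidefinite.\<close>

lemma quadratic_form_nonneg: "0 \<le> (\<Sum>x\<in>S. \<pi> x * g x * (\<Sum>y\<in>S. P x y * g y))"
proof -
  have "\<pi> x * P x y * (g x + g y)^2
      = \<pi> x * P x y * (g x)^2 + \<pi> x * P x y * (g y)^2 + 2 * (\<pi> x * P x y * (g x * g y))" for x y
    by (simp add: power2_eq_square algebra_simps)
  then have sum_eq: "(\<Sum>x\<in>S. \<Sum>y\<in>S. \<pi> x * P x y * (g x + g y)^2)
      = 2 * (\<Sum>x\<in>S. \<pi> x * (g x)^2) + 2 * (\<Sum>x\<in>S. \<pi> x * g x * (\<Sum>y\<in>S. P x y * g y))"
    by (simp only: sum.distrib sum_distrib_left[symmetric] sum_transition_source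
        sum_transition_target sum_transition_product)
  have "2 * (\<pi> x * (g x)^2) \<le> (\<Sum>y\<in>S. \<pi> x * P x y * (g x + g y)^2)" if x: "x \<in> S" for x
  proof -
    have "2 * (\<pi> x * (g x)^2) \<le> 4 * (\<pi> x * (g x)^2) * P x x"
      using mult_left_mono[OF lazy[OF x], of "4 * (\<pi> x * (g x)^2)"] weight_pos[OF x] by simp
    also have "\<dots> = \<pi> x * P x x * (g x + g x)^2"
      by (simp add: power2_eq_square algebra_simps)
    also have "\<dots> \<le> (\<Sum>y\<in>S. \<pi> x * P x y * (g x + g y)^2)"
      using x finite_states weight_pos off_diagonal_nonneg
      by (intro member_le_sum[where f = "\<lambda>y. \<pi> x * P x y * (g x + g y)^2"])
         (auto intro!: mult_nonneg_nonneg simp: less_imp_le[OF weight_pos])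
    finally show ?thesis .
  qed
  then have "2 * (\<Sum>x\<in>S. \<pi> x * (g x)^2) \<le> (\<Sum>x\<in>S. \<Sum>y\<in>S. \<pi> x * P x y * (g x + g y)^2)"
    by (simp add: sum_distrib_left sum_mono)
  then show ?thesis
    unfolding sum_eq by simp
qed

lemma eigenvector_orthogonal:
  fixes f :: "'s \<Rightarrow> complex"
  assumes eig: "\<And>x. x \<in> S \<Longrightarrow> (\<Sum>y\<in>S. of_real (P x y) * f y) = \<mu> * f x" and "\<mu> \<noteq> 1"
  shows "(\<Sum>x\<in>S. of_real (\<pi> x) * f x) = 0"
proof -
  have "(\<Sum>x\<in>S. of_real (\<pi> x) * f x) = (\<Sum>x\<in>S. of_real (\<pi> x) * (\<mu> * f x))"
    using stationary[of f] by (simp add: eig)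
  also have "\<dots> = \<mu> * (\<Sum>x\<in>S. of_real (\<pi> x) * f x)"
    by (simp add: sum_distrib_left mult_ac)
  finally have "(\<mu> - 1) * (\<Sum>x\<in>S. of_real (\<pi> x) * f x) = 0"
    by (simp add: algebra_simps)
  with \<open>\<mu> \<noteq> 1\<close> show ?thesis by simp
qed

lemma eigenvector_Re_Im:
  assumes eig: "\<And>x. x \<in> S \<Longrightarrow> (\<Sum>y\<in>S. of_real (P x y) * f y) = \<mu> * f x" and x: "x \<in> S"
  shows "(\<Sum>y\<in>S. P x y * Re (f y)) = Re \<mu> * Re (f x) - Im \<mu> * Im (f x)"
    and "(\<Sum>y\<in>S. P x y * Im (f y)) = Im \<mu> * Re (f x) + Re \<mu> * Im (f x)"
  using arg_cong[OF eig[OF x], of Re] arg_cong[OF eig[OF x], of Im] by (simp_all add: Re_sum Im_sum)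

lemma weighted_sq_norm_pos:
  fixes g :: "'s \<Rightarrow> real"
  assumes "x0 \<in> S" "g x0 \<noteq> 0"
  shows "0 < (\<Sum>x\<in>S. \<pi> x * (g x)^2)"
proof -
  have "0 < \<pi> x0 * (g x0)^2"
    using assms weight_pos by simp
  also have "\<dots> \<le> (\<Sum>x\<in>S. \<pi> x * (g x)^2)"
    using assms finite_states by (intro member_le_sum) (auto simp: less_imp_le[OF weight_pos])
  finally show ?thesis .
qed

lemma transition_self_adjoint:
  "(\<Sum>x\<in>S. \<pi> x * u x * (\<Sum>y\<in>S. P x y * v y)) = (\<Sum>x\<in>S. \<pi> x * v x * (\<Sum>y\<in>S. P x y * u y))"
proof -
  have "(\<Sum>x\<in>S. \<pi> x * u x * (\<Sum>y\<in>S. P x y * v y)) = (\<Sum>x\<in>S. \<Sum>y\<in>S. \<pi> x * P x y * (u x * v y))"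
    by (simp add: sum_distrib_left mult_ac)
  also have "\<dots> = (\<Sum>x\<in>S. \<Sum>y\<in>S. \<pi> x * P x y * (u y * v x))"
    using reversible_sum_swap[of "\<lambda>x y. u x * v y"] by simp
  also have "\<dots> = (\<Sum>x\<in>S. \<pi> x * v x * (\<Sum>y\<in>S. P x y * u y))"
    by (simp add: sum_distrib_left mult_ac)
  finally show ?thesis .
qed

lemma eigenvalue_real:
  assumes eig: "\<And>x. x \<in> S \<Longrightarrow> (\<Sum>y\<in>S. of_real (P x y) * f y) = \<mu> * f x"
    and nz: "x0 \<in> S" "f x0 \<noteq> 0"
  shows "Im \<mu> = 0"
proof -
  define g h where "g x = Re (f x)" and "h x = Im (f x)" for x
  define a b where "a = Re \<mu>" and "b = Im \<mu>"
  define Ng Nh Ngh where "Ng = (\<Sum>x\<in>S. \<pi> x * (g x)^2)" and "Nh = (\<Sum>x\<in>S. \<pi> x * (h x)^2)"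
    and "Ngh = (\<Sum>x\<in>S. \<pi> x * g x * h x)"
  note swap = transition_self_adjoint[of g h]
  have "(\<Sum>x\<in>S. \<pi> x * g x * (\<Sum>y\<in>S. P x y * h y)) = (\<Sum>x\<in>S. \<pi> x * g x * (b * g x + a * h x))"
    by (intro sum.cong refl) (simp add: eigenvector_Re_Im(2)[OF eig] g_def h_def a_def b_def)
  also have "\<dots> = b * Ng + a * Ngh"
    by (simp add: Ng_def Ngh_def power2_eq_square algebra_simps sum.distrib sum_distrib_left)
  moreover have "(\<Sum>x\<in>S. \<pi> x * h x * (\<Sum>y\<in>S. P x y * g y)) = (\<Sum>x\<in>S. \<pi> x * h x * (a * g x - b * h x))"
    by (intro sum.cong refl) (simp add: eigenvector_Re_Im(1)[OF eig] g_def h_def a_def b_def)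
  moreover have "\<dots> = a * Ngh - b * Nh"
    by (simp add: Nh_def Ngh_def power2_eq_square algebra_simps sum_subtractf sum_distrib_left)
  ultimately have "b * (Ng + Nh) = 0"
    using swap by (simp add: algebra_simps)
  moreover have "0 < Ng + Nh"
  proof -
    have "0 \<le> Ng" "0 \<le> Nh"
      unfolding Ng_def Nh_def by (auto intro!: sum_nonneg simp: less_imp_le[OF weight_pos])
    moreover have "g x0 \<noteq> 0 \<or> h x0 \<noteq> 0"
      using nz(2) by (simp add: g_def h_def complex_eq_iff)
    ultimately show ?thesis
      using weighted_sq_norm_pos[OF nz(1), of g] weighted_sq_norm_pos[OF nz(1), of h]
      unfolding Ng_def Nh_def by linarith
  qed
  ultimately show ?thesis
    by (simp add: b_def)
qed

context
  fixes a0 :: 's and m :: nat and h :: "nat \<Rightarrow> 's"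
  assumes base: "a0 \<in> S" and enum: "bij_betw h {..<m} (S - {a0})"
begin

lemma states_eq: "S = insert a0 (h ` {..<m})"
  using enum base unfolding bij_betw_def by auto

lemma sum_states_split: "(\<Sum>x\<in>S. F x) = F a0 + (\<Sum>j<m. F (h j))"
  using sum.remove[OF finite_states base, of F] sum.reindex_bij_betw[OF enum, of F] by simp

text \<open>On functions orthogonal to \<open>\<pi>\<close> the value at \<open>a0\<close> is determined by the others;
  eliminating it turns the transition operator into this \<open>m \<times> m\<close> matrix. Its characteristic
  polynomial shows that the eigenvalues on the orthogonal complement of the constants are finitely
  many and, if \<open>card S \<ge> 2\<close>, exist: both are needed for the \<open>Max\<close> in \<^const>\<open>abs_spectral_gap\<close>.\<close>

definition deflated_matrix :: "complex mat" where
  "deflated_matrix = mat m m (\<lambda>(i, j). of_real (P (h i) (h j) - P (h i) a0 * \<pi> (h j) / \<pi> a0))"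

definition orthogonal_extension :: "complex vec \<Rightarrow> 's \<Rightarrow> complex" where
  "orthogonal_extension v x =
     (if x = a0 then - (\<Sum>j<m. of_real (\<pi> (h j)) * v $ j) / of_real (\<pi> a0) else v $ inv_into {..<m} h x)"

lemma deflated_matrix_carrier: "deflated_matrix \<in> carrier_mat m m"
  by (simp add: deflated_matrix_def)

lemma orthogonal_base_value:
  "(\<Sum>x\<in>S. of_real (\<pi> x) * f x) = 0 \<longleftrightarrow> of_real (\<pi> a0) * f a0 = - (\<Sum>j<m. of_real (\<pi> (h j)) * f (h j))"
  by (simp add: sum_states_split eq_neg_iff_add_eq_0)

lemma deflated_matrix_mult:
  assumes orth: "(\<Sum>x\<in>S. of_real (\<pi> x) * f x) = 0" and i: "i < m"
  shows "(deflated_matrix *\<^sub>v vec m (\<lambda>j. f (h j))) $ i = (\<Sum>y\<in>S. of_real (P (h i) y) * f y)"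
proof -
  have a0_pos: "\<pi> a0 \<noteq> 0"
    using weight_pos[OF base] by simp
  have "(deflated_matrix *\<^sub>v vec m (\<lambda>j. f (h j))) $ i
      = (\<Sum>j<m. of_real (P (h i) (h j)) * f (h j))
        - of_real (P (h i) a0 / \<pi> a0) * (\<Sum>j<m. of_real (\<pi> (h j)) * f (h j))"
    using i by (simp add: deflated_matrix_def scalar_prod_def atLeast0LessThan sum_subtractf
        sum_distrib_left algebra_simps)
  also have "\<dots> = (\<Sum>j<m. of_real (P (h i) (h j)) * f (h j)) + of_real (P (h i) a0) * f a0"
  proof -
    have "(\<Sum>j<m. of_real (\<pi> (h j)) * f (h j)) = - (of_real (\<pi> a0) * f a0)"
      using orth orthogonal_base_value[of f] by simp
    then show ?thesis
      using a0_pos by (simp add: field_simps)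
  qed
  also have "\<dots> = (\<Sum>y\<in>S. of_real (P (h i) y) * f y)"
    by (simp add: sum_states_split)
  finally show ?thesis .
qed

lemma orthogonal_extension_enum: "j < m \<Longrightarrow> orthogonal_extension v (h j) = v $ j"
  using enum by (auto simp: orthogonal_extension_def bij_betw_def inv_into_f_f)

lemma orthogonal_extension_orthogonal: "(\<Sum>x\<in>S. of_real (\<pi> x) * orthogonal_extension v x) = 0"
  using weight_pos[OF base]
  by (simp add: orthogonal_base_value orthogonal_extension_enum) (simp add: orthogonal_extension_def)

lemma eigen_equation_at_base:
  fixes f :: "'s \<Rightarrow> complex"
  assumes orth: "(\<Sum>x\<in>S. of_real (\<pi> x) * f x) = 0"
    and eig: "\<And>i. i < m \<Longrightarrow> (\<Sum>y\<in>S. of_real (P (h i) y) * f y) = \<mu> * f (h i)"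
  shows "(\<Sum>y\<in>S. of_real (P a0 y) * f y) = \<mu> * f a0"
proof -
  define Pf where "Pf x = (\<Sum>y\<in>S. of_real (P x y) * f y)" for x
  have "(\<Sum>x\<in>S. of_real (\<pi> x) * Pf x) = 0"
    using stationary[of f] orth by (simp add: Pf_def)
  then have "of_real (\<pi> a0) * Pf a0 = - (\<Sum>j<m. of_real (\<pi> (h j)) * Pf (h j))"
    using orthogonal_base_value[of Pf] by blast
  also have "\<dots> = \<mu> * (- (\<Sum>j<m. of_real (\<pi> (h j)) * f (h j)))"
    using eig by (simp add: Pf_def sum_distrib_left mult_ac)
  also have "\<dots> = of_real (\<pi> a0) * (\<mu> * f a0)"
    using orth orthogonal_base_value[of f] by (simp add: mult_ac)
  finally show ?thesis
    using weight_pos[OF base] by (simp add: Pf_def)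
qed

lemma orthogonal_eigenvalue_if_deflated:
  assumes "eigenvalue deflated_matrix \<mu>"
  shows "\<mu> \<in> orthogonal_eigenvalues"
proof -
  obtain v where v: "v \<in> carrier_vec m" "v \<noteq> 0\<^sub>v m" "deflated_matrix *\<^sub>v v = \<mu> \<cdot>\<^sub>v v"
    using assms deflated_matrix_carrier unfolding eigenvalue_def eigenvector_def by auto
  define f where "f = orthogonal_extension v"
  have orth: "(\<Sum>x\<in>S. of_real (\<pi> x) * f x) = 0"
    unfolding f_def by (rule orthogonal_extension_orthogonal)
  have "vec m (\<lambda>j. f (h j)) = v"
    using v(1) by (intro eq_vecI) (auto simp: f_def orthogonal_extension_enum)
  then have eig_enum: "(\<Sum>y\<in>S. of_real (P (h i) y) * f y) = \<mu> * f (h i)" if "i < m" for i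
    using deflated_matrix_mult[OF orth that] v that by (simp add: f_def orthogonal_extension_enum)
  then have "(\<Sum>y\<in>S. of_real (P x y) * f y) = \<mu> * f x" if "x \<in> S" for x
    using that eigen_equation_at_base[OF orth eig_enum] states_eq by auto
  moreover obtain j where "j < m" "v $ j \<noteq> 0"
    using v(1,2) by (metis carrier_vecD eq_vecI index_zero_vec)
  then have "\<exists>x\<in>S. f x \<noteq> 0"
    using states_eq by (intro bexI[of _ "h j"]) (auto simp: f_def orthogonal_extension_enum)
  ultimately show ?thesis
    using orth unfolding orthogonal_eigenvalues_def by blast
qed

lemma deflated_eigenvalue_if_orthogonal:
  assumes "\<mu> \<in> orthogonal_eigenvalues"
  shows "eigenvalue deflated_matrix \<mu>"
proof -
  obtain f where nz: "\<exists>x\<in>S. f x \<noteq> 0" and orth: "(\<Sum>x\<in>S. of_real (\<pi> x) * f x) = 0"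
    and eig: "\<And>x. x \<in> S \<Longrightarrow> (\<Sum>y\<in>S. of_real (P x y) * f y) = \<mu> * f x"
    using assms unfolding orthogonal_eigenvalues_def by blast
  define v where "v = vec m (\<lambda>j. f (h j))"
  have "v \<noteq> 0\<^sub>v m"
  proof
    assume "v = 0\<^sub>v m"
    then have enum_zero: "f (h j) = 0" if "j < m" for j
      using that unfolding v_def by (metis index_vec index_zero_vec(1))
    then have "f a0 = 0"
      using orth weight_pos[OF base] by (simp add: orthogonal_base_value)
    with enum_zero nz show False
      using states_eq by auto
  qed
  moreover have "deflated_matrix *\<^sub>v v = \<mu> \<cdot>\<^sub>v v"
  proof (rule eq_vecI)
    fix i assume "i < dim_vec (\<mu> \<cdot>\<^sub>v v)"
    then have "i < m" "h i \<in> S"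
      using states_eq by (auto simp: v_def)
    then show "(deflated_matrix *\<^sub>v v) $ i = (\<mu> \<cdot>\<^sub>v v) $ i"
      by (simp add: v_def deflated_matrix_mult[OF orth] eig)
  qed (use deflated_matrix_carrier in \<open>simp add: v_def\<close>)
  moreover have "v \<in> carrier_vec m"
    by (simp add: v_def)
  ultimately show ?thesis
    using deflated_matrix_carrier unfolding eigenvalue_def eigenvector_def by auto
qed

lemma eigenvalue_deflated_matrix_iff: "eigenvalue deflated_matrix \<mu> \<longleftrightarrow> \<mu> \<in> orthogonal_eigenvalues"
  using orthogonal_eigenvalue_if_deflated deflated_eigenvalue_if_orthogonal by blast

end

lemma obtain_enumeration:
  assumes "a0 \<in> S"
  obtains h where "bij_betw h {..<card S - 1} (S - {a0})"
  using ex_bij_betw_nat_finite[of "S - {a0}"] finite_states assms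
  by (auto simp: atLeast0LessThan card_Diff_singleton)

lemma finite_orthogonal_eigenvalues: "finite orthogonal_eigenvalues"
proof (cases "S = {}")
  case True
  have "orthogonal_eigenvalues = {}"
    unfolding orthogonal_eigenvalues_def using True by simp
  then show ?thesis by simp
next
  case False
  then obtain a0 where a0: "a0 \<in> S" by blast
  then obtain h where h: "bij_betw h {..<card S - 1} (S - {a0})" by (rule obtain_enumeration)
  let ?C = "deflated_matrix a0 (card S - 1) h"
  have "char_poly ?C \<noteq> 0"
    using degree_monic_char_poly[OF deflated_matrix_carrier[OF a0 h]] by auto
  then have "finite {\<mu>. poly (char_poly ?C) \<mu> = 0}"
    by (rule poly_roots_finite)
  moreover have "orthogonal_eigenvalues = {\<mu>. poly (char_poly ?C) \<mu> = 0}"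
    using eigenvalue_root_char_poly[OF deflated_matrix_carrier[OF a0 h]]
      eigenvalue_deflated_matrix_iff[OF a0 h] by blast
  ultimately show ?thesis by simp
qed

lemma orthogonal_eigenvalues_nonempty:
  assumes "2 \<le> card S"
  shows "orthogonal_eigenvalues \<noteq> {}"
proof -
  obtain a0 where a0: "a0 \<in> S"
    using assms by fastforce
  then obtain h where h: "bij_betw h {..<card S - 1} (S - {a0})" by (rule obtain_enumeration)
  let ?C = "deflated_matrix a0 (card S - 1) h"
  obtain as where as: "char_poly ?C = (\<Prod>a\<leftarrow>as. [:- a, 1:])" "length as = card S - 1"
    using char_poly_factorized[OF deflated_matrix_carrier[OF a0 h]] by blast
  then obtain \<mu> rest where "as = \<mu> # rest"
    using assms by (cases as) auto
  then have "poly (char_poly ?C) \<mu> = 0"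
    using as(1) by (simp add: poly_prod_list)
  then show ?thesis
    using eigenvalue_root_char_poly[OF deflated_matrix_carrier[OF a0 h]]
      eigenvalue_deflated_matrix_iff[OF a0 h] by blast
qed

context
  fixes B :: real
  assumes B_pos: "0 < B" and poincare: "poincare_inequality B"
begin

lemma real_eigenvalue_bounds:
  fixes g :: "'s \<Rightarrow> real"
  assumes eig: "\<And>x. x \<in> S \<Longrightarrow> (\<Sum>y\<in>S. P x y * g y) = r * g x"
    and orth: "(\<Sum>x\<in>S. \<pi> x * g x) = 0" and nz: "x0 \<in> S" "g x0 \<noteq> 0"
  shows "0 \<le> r \<and> r \<le> 1 - 1/B"
proof -
  define N where "N = (\<Sum>x\<in>S. \<pi> x * (g x)^2)"
  have N_pos: "0 < N"
    unfolding N_def by (rule weighted_sq_norm_pos[where g = g, OF nz])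
  have H: "(\<Sum>x\<in>S. \<pi> x * g x * (\<Sum>y\<in>S. P x y * g y)) = r * N"
    unfolding N_def by (simp add: eig power2_eq_square sum_distrib_left mult.assoc mult.left_commute cong: sum.cong)
  have "0 \<le> r"
    using quadratic_form_nonneg[of g] N_pos by (simp add: H zero_le_mult_iff)
  moreover have "N \<le> B * dirichlet_form g"
    using poincare orth unfolding poincare_inequality_def N_def by blast
  then have "N \<le> B * ((1 - r) * N)"
    by (simp only: dirichlet_form_eq H N_def[symmetric]) (simp add: algebra_simps)
  then have "1 \<le> B * (1 - r)"
    using N_pos by (simp add: mult.assoc[symmetric])
  then have "1 / B \<le> 1 - r"
    using B_pos by (simp add: field_simps)
  ultimately show ?thesis by simp
qed

lemma eigenvalue_bounds:
  fixes f :: "'s \<Rightarrow> complex"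
  assumes eig: "\<And>x. x \<in> S \<Longrightarrow> (\<Sum>y\<in>S. of_real (P x y) * f y) = \<mu> * f x"
    and orth: "(\<Sum>x\<in>S. of_real (\<pi> x) * f x) = 0" and nz: "x0 \<in> S" "f x0 \<noteq> 0"
  shows "Im \<mu> = 0 \<and> 0 \<le> Re \<mu> \<and> Re \<mu> \<le> 1 - 1/B"
proof -
  have real: "Im \<mu> = 0"
    by (rule eigenvalue_real[OF eig nz])
  have eig_Re: "(\<Sum>y\<in>S. P x y * Re (f y)) = Re \<mu> * Re (f x)"
    and eig_Im: "(\<Sum>y\<in>S. P x y * Im (f y)) = Re \<mu> * Im (f x)" if "x \<in> S" for x
    using eigenvector_Re_Im[OF eig that] real by simp_all
  have orth_Re: "(\<Sum>x\<in>S. \<pi> x * Re (f x)) = 0" and orth_Im: "(\<Sum>x\<in>S. \<pi> x * Im (f x)) = 0"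
    using arg_cong[OF orth, of Re] arg_cong[OF orth, of Im] by (simp_all add: Re_sum Im_sum)
  have "Re (f x0) \<noteq> 0 \<or> Im (f x0) \<noteq> 0"
    using nz(2) complex_eq_iff by auto
  then have "0 \<le> Re \<mu> \<and> Re \<mu> \<le> 1 - 1/B"
    using real_eigenvalue_bounds[OF eig_Re orth_Re nz(1)] real_eigenvalue_bounds[OF eig_Im orth_Im nz(1)]
    by blast
  with real show ?thesis by simp
qed

theorem abs_spectral_gap_ge:
  assumes "2 \<le> card S"
  shows "1 / B \<le> abs_spectral_gap S P"
proof -
  define Ev where "Ev = {cmod \<mu> | \<mu>. is_eigenvalue S P \<mu> \<and> \<mu> \<noteq> 1}"
  have orth_bounds: "Im \<mu> = 0 \<and> 0 \<le> Re \<mu> \<and> Re \<mu> \<le> 1 - 1/B" if "\<mu> \<in> orthogonal_eigenvalues" for \<mu>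
    using that eigenvalue_bounds unfolding orthogonal_eigenvalues_def by blast
  have "Ev \<subseteq> cmod ` orthogonal_eigenvalues"
    unfolding Ev_def orthogonal_eigenvalues_def is_eigenvalue_def
    using eigenvector_orthogonal by blast
  then have "finite Ev"
    using finite_orthogonal_eigenvalues finite_surj by blast
  moreover have "Ev \<noteq> {}"
  proof -
    obtain \<mu> where \<mu>: "\<mu> \<in> orthogonal_eigenvalues"
      using orthogonal_eigenvalues_nonempty[OF assms] by blast
    then have "\<mu> \<noteq> 1"
      using orth_bounds[OF \<mu>] B_pos by auto
    moreover have "is_eigenvalue S P \<mu>"
      using \<mu> unfolding orthogonal_eigenvalues_def is_eigenvalue_def by blast
    ultimately show ?thesis
      unfolding Ev_def by blast
  qed
  moreover have "r \<le> 1 - 1/B" if "r \<in> Ev" for r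
  proof -
    obtain \<mu> where r: "r = cmod \<mu>" and \<mu>: "\<mu> \<in> orthogonal_eigenvalues"
      using \<open>Ev \<subseteq> cmod ` orthogonal_eigenvalues\<close> \<open>r \<in> Ev\<close> by blast
    then have "\<mu> = of_real (Re \<mu>)" "0 \<le> Re \<mu>" "Re \<mu> \<le> 1 - 1/B"
      using orth_bounds[OF \<mu>] by (auto simp: complex_eq_iff)
    then show ?thesis
      unfolding r by (metis abs_of_nonneg norm_of_real)
  qed
  ultimately have "Max Ev \<le> 1 - 1/B"
    by simp
  then show ?thesis
    unfolding abs_spectral_gap_def Ev_def[symmetric] by simp
qed

theorem relaxation_time_le:
  assumes "2 \<le> card S"
  shows "0 < abs_spectral_gap S P \<and> relaxation_time S P \<le> B"
proof -
  have gap: "1 / B \<le> abs_spectral_gap S P"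
    by (rule abs_spectral_gap_ge[OF assms])
  then have pos: "0 < abs_spectral_gap S P"
    using B_pos by (meson less_le_trans zero_less_divide_1_iff)
  moreover have "1 / abs_spectral_gap S P \<le> 1 / (1 / B)"
    using gap pos B_pos by (intro divide_left_mono) auto
  ultimately show ?thesis
    unfolding relaxation_time_def by simp
qed

end

end

section \<open>Even subgraphs\<close>

lemma symdiff_cancel_right: "symdiff (symdiff A B) B = A"
  unfolding symdiff_def by blast

lemma symdiff_empty [simp]: "symdiff A {} = A" "symdiff {} A = A"
  unfolding symdiff_def by blast+

lemma symdiff_subset: "A \<subseteq> E \<Longrightarrow> B \<subseteq> E \<Longrightarrow> symdiff A B \<subseteq> E"
  unfolding symdiff_def by blast

lemma finite_symdiff: "finite A \<Longrightarrow> finite B \<Longrightarrow> finite (symdiff A B)"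
  unfolding symdiff_def by blast

lemma card_symdiff:
  assumes "finite X" "finite Y"
  shows "card (symdiff X Y) + 2 * card (X \<inter> Y) = card X + card Y"
proof -
  have "card (symdiff X Y) = card (X - Y) + card (Y - X)"
    unfolding symdiff_def by (rule card_Un_disjoint) (use assms in auto)
  moreover have "card X = card (X - Y) + card (X \<inter> Y)" "card Y = card (Y - X) + card (X \<inter> Y)"
    using card_Int_Diff[OF assms(1), of Y] card_Int_Diff[OF assms(2), of X] by (simp_all add: Int_commute)
  ultimately show ?thesis by simp
qed

lemma card_symdiff_le: "finite X \<Longrightarrow> finite Y \<Longrightarrow> card (symdiff X Y) \<le> card X + card Y"
  using card_symdiff[of X Y] by linarith

lemma even_card_symdiff:
  "finite X \<Longrightarrow> finite Y \<Longrightarrow> even (card (symdiff X Y)) \<longleftrightarrow> (even (card X) \<longleftrightarrow> even (card Y))"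
  using card_symdiff[of X Y] by presburger

lemma odd_deg_symdiff:
  assumes "finite A" "finite B"
  shows "odd (deg (symdiff A B) u) \<longleftrightarrow> (odd (deg A u) \<noteq> odd (deg B u))"
proof -
  have "{e \<in> symdiff A B. u \<in> e} = symdiff {e \<in> A. u \<in> e} {e \<in> B. u \<in> e}"
    unfolding symdiff_def by blast
  then show ?thesis
    unfolding deg_def using even_card_symdiff[of "{e \<in> A. u \<in> e}" "{e \<in> B. u \<in> e}"] assms by auto
qed

lemma bdry_symdiff:
  assumes "finite A" "finite B"
  shows "bdry V (symdiff A B) = symdiff (bdry V A) (bdry V B)"
  unfolding bdry_def symdiff_def[of "{u \<in> V. odd (deg A u)}"] using odd_deg_symdiff[OF assms] by auto

lemma bdry_empty [simp]: "bdry V {} = {}"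
  unfolding bdry_def deg_def by simp

lemma bdry_subset: "bdry V A \<subseteq> V"
  unfolding bdry_def by auto

definition toggle :: "'b set \<Rightarrow> 'b \<Rightarrow> 'b set" where
  "toggle A e = symdiff A {e}"

lemma symdiff_toggle: "symdiff A (toggle A e) = {e}"
  unfolding toggle_def symdiff_def by blast

lemma toggle_toggle [simp]: "toggle (toggle A e) e = A"
  unfolding toggle_def symdiff_def by blast

lemma toggle_neq: "toggle A e \<noteq> A"
  unfolding toggle_def symdiff_def by blast

lemma toggle_eq_iff: "toggle A e = toggle A e' \<longleftrightarrow> e = e'"
  unfolding toggle_def symdiff_def by blast

lemma toggle_eq_if_symdiff: "symdiff A B = {e} \<Longrightarrow> B = toggle A e"
  unfolding toggle_def symdiff_def by blast

lemma toggle_notin_symdiff_iff: "e \<notin> symdiff (toggle A e) M \<longleftrightarrow> e \<in> symdiff A M"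
  unfolding toggle_def symdiff_def by blast

locale finite_graph =
  fixes V :: "'a set" and E :: "'a set set"
  assumes simple: "simple_graph V E"
begin

lemma finite_vertices: "finite V"
  using simple unfolding simple_graph_def by simp

lemma edgeE:
  assumes "e \<in> E"
  obtains u v where "e = {u, v}" "u \<in> V" "v \<in> V" "u \<noteq> v"
  using simple assms unfolding simple_graph_def by blast

lemma edge_subset: "e \<in> E \<Longrightarrow> e \<subseteq> V"
  by (metis edgeE empty_subsetI insert_subset)

lemma card_edge: "e \<in> E \<Longrightarrow> card e = 2"
  by (metis edgeE card_2_iff)

lemma finite_edges: "finite E"
  using finite_subset[of E "Pow V"] edge_subset finite_vertices by blast

lemma finite_subgraph: "A \<subseteq> E \<Longrightarrow> finite A"
  using finite_edges finite_subset by blast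

lemma finite_bdry: "finite (bdry V A)"
  using finite_subset[OF bdry_subset finite_vertices] .

lemma deg_pos: "e \<in> E \<Longrightarrow> x \<in> e \<Longrightarrow> 1 \<le> deg E x"
  unfolding deg_def using finite_edges by (auto simp: Suc_le_eq card_gt_0_iff)

lemma deg_le_max_degree: "x \<in> V \<Longrightarrow> deg E x \<le> max_degree V E"
  unfolding max_degree_def using finite_vertices by simp

lemma sum_edges_swap:
  assumes "X \<subseteq> V"
  shows "(\<Sum>e\<in>E. \<Sum>x\<in>e \<inter> X. f x) = (\<Sum>x\<in>X. real (deg E x) * f x)"
proof -
  have "(\<Sum>e\<in>E. \<Sum>x\<in>e \<inter> X. f x) = (\<Sum>e\<in>E. \<Sum>x\<in>{x \<in> X. x \<in> e}. f x)"
    by (intro sum.cong) auto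
  also have "\<dots> = (\<Sum>x\<in>X. \<Sum>e\<in>{e \<in> E. x \<in> e}. f x)"
    using sum.swap_restrict[OF finite_edges finite_subset[OF assms finite_vertices], of "\<lambda>e x. f x"]
    by simp
  also have "\<dots> = (\<Sum>x\<in>X. real (deg E x) * f x)"
    unfolding deg_def by simp
  finally show ?thesis .
qed

lemma bdry_singleton:
  assumes "e \<in> E"
  shows "bdry V {e} = e"
proof -
  have "{x \<in> {e}. u \<in> x} = (if u \<in> e then {e} else {})" for u
    by auto
  then have "deg {e} u = (if u \<in> e then 1 else 0)" for u
    unfolding deg_def by simp
  then show ?thesis
    unfolding bdry_def using edge_subset[OF assms] by auto
qed

lemma bdry_toggle: "A \<subseteq> E \<Longrightarrow> e \<in> E \<Longrightarrow> bdry V (toggle A e) = symdiff (bdry V A) e"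
  unfolding toggle_def using bdry_symdiff[of A "{e}" V] bdry_singleton finite_subgraph by simp

lemma even_card_bdry: "A \<subseteq> E \<Longrightarrow> even (card (bdry V A))"
proof (induction A rule: infinite_finite_induct)
  case (insert e A)
  have "insert e A = toggle A e"
    using insert.hyps(2) unfolding toggle_def symdiff_def by blast
  moreover have "A \<subseteq> E" "e \<in> E"
    using insert.prems by auto
  ultimately have "bdry V (insert e A) = symdiff (bdry V A) e"
    using bdry_toggle[of A e] by simp
  then show ?case
    using insert even_card_symdiff[OF finite_bdry, of e A] card_edge[of e]
      finite_subset[OF edge_subset finite_vertices, of e] by simp
qed (simp_all add: finite_subgraph)

lemma Ck_0_iff: "A \<in> Ck V E 0 \<longleftrightarrow> A \<subseteq> E \<and> bdry V A = {}"
  unfolding Ck_def using finite_bdry by auto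

lemma worm_space_iff: "A \<in> worm_space V E \<longleftrightarrow> A \<subseteq> E \<and> card (bdry V A) \<le> 2"
proof -
  have "A \<subseteq> E \<Longrightarrow> card (bdry V A) \<le> 2 \<Longrightarrow> card (bdry V A) = 0 \<or> card (bdry V A) = 2"
    using even_card_bdry[of A] by presburger
  then show ?thesis
    unfolding worm_space_def Ck_def by auto
qed

lemma card_bdry_worm_space: "A \<in> worm_space V E \<Longrightarrow> A \<notin> Ck V E 0 \<Longrightarrow> card (bdry V A) = 2"
  unfolding worm_space_def Ck_def by auto

lemma toggle_moves_defect:
  assumes A: "A \<in> worm_space V E" "A \<notin> Ck V E 0"
    and B: "toggle A e \<in> worm_space V E" "toggle A e \<notin> Ck V E 0" and e: "e \<in> E"
  obtains u v where "e = {u, v}" "u \<noteq> v" "e \<inter> bdry V A = {u}" "e \<inter> bdry V (toggle A e) = {v}"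
proof -
  have bdry_B: "bdry V (toggle A e) = symdiff (bdry V A) e"
    using A e by (simp add: bdry_toggle worm_space_iff)
  have "card (symdiff (bdry V A) e) + 2 * card (bdry V A \<inter> e) = 4"
    using card_symdiff[OF finite_bdry finite_subset[OF edge_subset[OF e] finite_vertices], of A]
      card_bdry_worm_space[OF A] card_edge[OF e] by simp
  then have "card (e \<inter> bdry V A) = 1"
    using card_bdry_worm_space[OF B] bdry_B by (simp add: Int_commute)
  then obtain u where u: "e \<inter> bdry V A = {u}"
    by (rule card_1_singletonE)
  obtain v where uv: "e = {u, v}" "u \<noteq> v"
    using edgeE[OF e] u by (metis Int_iff insertE insert_commute singletonD singletonI)
  have "e \<inter> bdry V (toggle A e) = {v}"
    using u uv unfolding bdry_B symdiff_def by auto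
  with u uv that show ?thesis
    by blast
qed

lemma finite_Ck: "finite (Ck V E k)"
  using finite_subset[of "Ck V E k" "Pow E"] finite_edges unfolding Ck_def by auto

lemma finite_worm_space: "finite (worm_space V E)"
  unfolding worm_space_def using finite_Ck by simp

section \<open>Canonical paths\<close>

definition admissible_order :: "'a set set \<Rightarrow> 'a set list \<Rightarrow> bool" where
  "admissible_order D xs \<longleftrightarrow>
     distinct xs \<and> set xs = D \<and> (\<forall>k\<le>length xs. card (bdry V (set (take k xs))) \<le> 2)"

text \<open>If \<open>D\<close> has no odd vertex any edge can be removed; otherwise removing an edge at an odd
  vertex \<open>a\<close> trades \<open>a\<close> for at most one new odd vertex.\<close>

lemma exists_edge_removal:
  assumes D: "D \<subseteq> E" "card (bdry V D) \<le> 2" "D \<noteq> {}"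
  shows "\<exists>e\<in>D. card (bdry V (D - {e})) \<le> 2"
proof -
  have bdry_remove: "bdry V (D - {e}) = symdiff (bdry V D) e" if "e \<in> D" for e
  proof -
    have "D - {e} = toggle D e"
      using that unfolding toggle_def symdiff_def by blast
    then show ?thesis
      using bdry_toggle[of D e] D(1) that by auto
  qed
  show ?thesis
  proof (cases "bdry V D = {}")
    case True
    obtain e where "e \<in> D"
      using D(3) by blast
    then show ?thesis
      using bdry_remove[of e] True card_edge[of e] D(1) by (intro bexI[of _ e]) auto
  next
    case False
    then obtain a where a: "a \<in> bdry V D" by blast
    then have "deg D a \<noteq> 0"
      unfolding bdry_def by (metis (mono_tags) mem_Collect_eq odd_pos neq0_conv)
    then obtain e where e: "e \<in> D" "a \<in> e"
      unfolding deg_def by (metis (mono_tags, lifting) card.empty empty_Collect_eq)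
    then obtain x where ex: "e = {a, x}"
      using edgeE[of e] D(1) by (metis insert_commute insertE singletonD subsetD)
    have "symdiff (bdry V D) e \<subseteq> insert x (bdry V D - {a})"
      using a unfolding ex symdiff_def by blast
    then have "card (symdiff (bdry V D) e) \<le> card (insert x (bdry V D - {a}))"
      using finite_bdry by (intro card_mono) auto
    also have "\<dots> \<le> Suc (card (bdry V D - {a}))"
      using finite_bdry by (simp add: card_insert_if)
    also have "\<dots> \<le> 2"
      using D(2) a finite_bdry by (simp add: card_Diff_singleton)
    finally show ?thesis
      using bdry_remove e(1) by auto
  qed
qed

lemma admissible_order_exists:
  assumes "D \<subseteq> E" "card (bdry V D) \<le> 2"
  shows "\<exists>xs. admissible_order D xs"
  using assms
proof (induction "card D" arbitrary: D)
  case 0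
  then have "D = {}"
    using finite_subgraph by simp
  then show ?case
    unfolding admissible_order_def by (intro exI[of _ "[]"]) simp
next
  case (Suc n)
  then obtain e where e: "e \<in> D" "card (bdry V (D - {e})) \<le> 2"
    using exists_edge_removal[of D] by fastforce
  moreover have "n = card (D - {e})"
    using Suc.hyps(2) e(1) finite_subgraph[OF Suc.prems(1)] by simp
  ultimately obtain xs where xs: "admissible_order (D - {e}) xs"
    using Suc by blast
  have "admissible_order D (xs @ [e])"
    unfolding admissible_order_def
  proof (intro conjI allI impI)
    show "distinct (xs @ [e])" "set (xs @ [e]) = D"
      using xs e(1) unfolding admissible_order_def by auto
    fix k assume "k \<le> length (xs @ [e])"
    then show "card (bdry V (set (take k (xs @ [e])))) \<le> 2"
      using xs Suc.prems(2) \<open>set (xs @ [e]) = D\<close> unfolding admissible_order_def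
      by (cases "k \<le> length xs") auto
  qed
  then show ?case by blast
qed

definition canonical_order :: "'a set set \<Rightarrow> 'a set list" where
  "canonical_order D = (SOME xs. admissible_order D xs)"

text \<open>The canonical path from \<open>J\<close> to \<open>I\<close> toggles the edges of \<open>I \<oplus> J\<close> in an admissible order.
  Its \<open>k\<close>-th state is \<open>J \<oplus> D\<^sub>k\<close>, where \<open>D\<^sub>k\<close> are the first \<open>k\<close> edges; the complementary
  subgraph \<open>I \<oplus> D\<^sub>k\<close> (the paper's \<open>\<eta>\<close>) encodes the path through a given transition.\<close>

definition path_edges :: "'a set set \<Rightarrow> 'a set set \<Rightarrow> nat \<Rightarrow> 'a set set" where
  "path_edges I J k = set (take k (canonical_order (symdiff I J)))"

definition path_state :: "'a set set \<Rightarrow> 'a set set \<Rightarrow> nat \<Rightarrow> 'a set set" where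
  "path_state I J k = symdiff J (path_edges I J k)"

definition path_complement :: "'a set set \<Rightarrow> 'a set set \<Rightarrow> nat \<Rightarrow> 'a set set" where
  "path_complement I J k = symdiff I (path_edges I J k)"

definition path_length :: "'a set set \<Rightarrow> 'a set set \<Rightarrow> nat" where
  "path_length I J = length (canonical_order (symdiff I J))"

lemma symdiff_path_state_complement: "symdiff (path_state I J k) (path_complement I J k) = symdiff I J"
  unfolding path_state_def path_complement_def symdiff_def by blast

lemma path_state_0: "path_state I J 0 = J"
  unfolding path_state_def path_edges_def by simp

context
  fixes I J :: "'a set set"
  assumes I: "I \<in> worm_space V E" and J: "J \<in> Ck V E 0"
begin

lemma endpoints_subset: "I \<subseteq> E" "J \<subseteq> E" "symdiff I J \<subseteq> E"
  using I J symdiff_subset[of I E J] by (auto simp: worm_space_iff Ck_0_iff)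

lemma canonical_order_admissible:
  "admissible_order (symdiff I J) (canonical_order (symdiff I J))"
proof -
  have "bdry V (symdiff I J) = bdry V I"
    using bdry_symdiff[of I J V] J endpoints_subset finite_subgraph by (simp add: Ck_0_iff)
  then have "\<exists>xs. admissible_order (symdiff I J) xs"
    using admissible_order_exists endpoints_subset I by (simp add: worm_space_iff)
  then show ?thesis
    unfolding canonical_order_def by (rule someI_ex)
qed

lemma path_edges_subset: "path_edges I J k \<subseteq> symdiff I J"
  using canonical_order_admissible unfolding path_edges_def admissible_order_def
  by (metis set_take_subset)

lemma card_bdry_path_edges: "card (bdry V (path_edges I J k)) \<le> 2"
  using canonical_order_admissible unfolding path_edges_def admissible_order_def
  by (metis nle_le take_all)

lemma path_length_le: "path_length I J \<le> card E"
  using canonical_order_admissible card_mono[OF finite_edges endpoints_subset(3)]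
  unfolding path_length_def admissible_order_def by (metis distinct_card)

lemma path_state_length: "path_state I J (path_length I J) = I"
  using canonical_order_admissible
  unfolding path_state_def path_edges_def path_length_def admissible_order_def
  by (auto simp: symdiff_def)

lemma path_step_edge: "k < path_length I J \<Longrightarrow> canonical_order (symdiff I J) ! k \<in> E"
  using canonical_order_admissible endpoints_subset(3)
  unfolding path_length_def admissible_order_def by (metis nth_mem subsetD)

lemma path_state_Suc:
  assumes "k < path_length I J"
  shows "path_state I J (Suc k) = toggle (path_state I J k) (canonical_order (symdiff I J) ! k)"
proof -
  let ?xs = "canonical_order (symdiff I J)"
  have "distinct (take (Suc k) ?xs)"
    using canonical_order_admissible unfolding admissible_order_def by simp
  moreover have "take (Suc k) ?xs = take k ?xs @ [?xs ! k]"
    using assms unfolding path_length_def by (simp add: take_Suc_conv_app_nth)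
  ultimately show ?thesis
    unfolding path_state_def path_edges_def toggle_def symdiff_def by auto
qed

lemma path_state_in_worm_space: "path_state I J k \<in> worm_space V E"
proof -
  have "finite (path_edges I J k)"
    using path_edges_subset endpoints_subset finite_subgraph by (meson subset_trans)
  then have "bdry V (path_state I J k) = bdry V (path_edges I J k)"
    unfolding path_state_def using bdry_symdiff[of J "path_edges I J k" V] J
      endpoints_subset finite_subgraph by (simp add: Ck_0_iff)
  then show ?thesis
    unfolding worm_space_iff path_state_def using card_bdry_path_edges path_edges_subset
      endpoints_subset symdiff_subset by (metis subset_trans)
qed

lemma path_complement_subset: "path_complement I J k \<subseteq> E"
  unfolding path_complement_def using path_edges_subset endpoints_subset symdiff_subset
  by (metis subset_trans)

lemma bdry_path_complement:
  "bdry V (path_complement I J k) = symdiff (bdry V I) (bdry V (path_edges I J k))"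
  unfolding path_complement_def using path_edges_subset endpoints_subset finite_subgraph
  by (metis bdry_symdiff subset_trans)

lemma path_complement_in_Ck:
  "path_complement I J k \<in> Ck V E 0 \<union> Ck V E 2 \<union> Ck V E 4"
proof -
  let ?b = "card (bdry V (path_complement I J k))"
  have "?b \<le> card (bdry V I) + card (bdry V (path_edges I J k))"
    unfolding bdry_path_complement by (rule card_symdiff_le[OF finite_bdry finite_bdry])
  then have "?b \<le> 4"
    using I card_bdry_path_edges[of k] by (simp add: worm_space_iff)
  then have "?b = 0 \<or> ?b = 2 \<or> ?b = 4"
    using even_card_bdry[OF path_complement_subset[of k]] by presburger
  then show ?thesis
    unfolding Ck_def using path_complement_subset by auto
qed

lemma card_bdry_path_complement_gt_2:
  assumes "2 < card (bdry V (path_complement I J k))"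
  shows "I \<notin> Ck V E 0"
  using assms card_bdry_path_edges[of k] unfolding bdry_path_complement by (auto simp: Ck_0_iff)

end

lemma path_injective:
  assumes I: "I \<in> worm_space V E" and J: "J \<in> Ck V E 0" and k: "k < path_length I J"
    and I': "I' \<in> worm_space V E" and J': "J' \<in> Ck V E 0" and k': "k' < path_length I' J'"
    and same_state: "path_state I J k = path_state I' J' k'"
    and same_step: "path_state I J (Suc k) = path_state I' J' (Suc k')"
    and same_complement: "path_complement I J k = path_complement I' J' k'"
  shows "I = I' \<and> J = J' \<and> k = k'"
proof -
  have D: "symdiff I J = symdiff I' J'"
    using symdiff_path_state_complement[of I J k] symdiff_path_state_complement[of I' J' k']
      same_state same_complement by simp
  let ?xs = "canonical_order (symdiff I J)"
  have "toggle (path_state I J k) (?xs ! k) = toggle (path_state I J k) (?xs ! k')"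
    using same_step path_state_Suc[OF I J k] path_state_Suc[OF I' J' k'] same_state D by simp
  then have "?xs ! k = ?xs ! k'"
    by (simp add: toggle_eq_iff)
  moreover have "distinct ?xs"
    using canonical_order_admissible[OF I J] unfolding admissible_order_def by simp
  ultimately have kk: "k = k'"
    using k k' D unfolding path_length_def by (simp add: nth_eq_iff_index_eq)
  have "J = J'"
    using same_state D kk unfolding path_state_def path_edges_def
    by (metis symdiff_cancel_right)
  with D kk show ?thesis
    by (metis symdiff_cancel_right)
qed

end

section \<open>The worm process\<close>

lemma wt_pos: "0 < w \<Longrightarrow> 0 < wt w M A"
  unfolding wt_def by simp

locale worm_chain = finite_graph V E for V :: "'a set" and E +
  fixes M :: "'a set set" and w :: real
  assumes edges_nonempty: "E \<noteq> {}" and w_pos: "0 < w" and w_less_1: "w < 1" and M_subset: "M \<subseteq> E"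
begin

abbreviation \<Delta> :: real where "\<Delta> \<equiv> real (max_degree V E)"

lemma deg_bounds: "e \<in> E \<Longrightarrow> x \<in> e \<Longrightarrow> 1 \<le> real (deg E x) \<and> real (deg E x) \<le> \<Delta>"
  using deg_pos deg_le_max_degree edge_subset by (metis of_nat_le_iff of_nat_1 subsetD)

lemma max_degree_ge_1: "1 \<le> \<Delta>"
proof -
  obtain e u v where "e \<in> E" "e = {u, v}"
    using edges_nonempty edgeE by (metis ex_in_conv)
  then show ?thesis
    using deg_bounds[of e u] by auto
qed

lemma card_vertices_ge_2: "2 \<le> card V"
proof -
  obtain e where "e \<in> E"
    using edges_nonempty by blast
  then show ?thesis
    using card_mono[OF finite_vertices edge_subset] card_edge by fastforce
qed

definition weight_ratio :: "'a set set \<Rightarrow> 'a set \<Rightarrow> real" where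
  "weight_ratio A e = (if e \<notin> symdiff A M then w else inverse w)"

lemma weight_ratio_ge: "w \<le> weight_ratio A e"
proof -
  have "1 \<le> inverse w"
    using w_pos w_less_1 by (simp add: one_le_inverse)
  then show ?thesis
    unfolding weight_ratio_def using w_less_1 by auto
qed

lemma weight_ratio_pos: "0 < weight_ratio A e"
  using weight_ratio_ge w_pos by (rule less_le_trans[rotated])

lemma weight_ratio_toggle: "weight_ratio (toggle A e) e = inverse (weight_ratio A e)"
  unfolding weight_ratio_def using toggle_notin_symdiff_iff[of e A M] by auto

lemma wt_toggle:
  assumes "A \<subseteq> E"
  shows "wt w M (toggle A e) = wt w M A * weight_ratio A e"
proof -
  have fin: "finite (symdiff A M)"
    using finite_subgraph[OF assms] finite_subgraph[OF M_subset] by (rule finite_symdiff)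
  show ?thesis
  proof (cases "e \<in> symdiff A M")
    case False
    then have "symdiff (toggle A e) M = insert e (symdiff A M)"
      unfolding toggle_def symdiff_def by blast
    then have "card (symdiff (toggle A e) M) = Suc (card (symdiff A M))"
      using False fin by simp
    then show ?thesis
      using False unfolding wt_def weight_ratio_def by simp
  next
    case True
    then have "symdiff A M = insert e (symdiff (toggle A e) M)" "e \<notin> symdiff (toggle A e) M"
      unfolding toggle_def symdiff_def by blast+
    then have "card (symdiff A M) = Suc (card (symdiff (toggle A e) M))"
      using fin by (simp add: finite_insert[symmetric])
    then have "wt w M (toggle A e) = wt w M A * inverse w"
      unfolding wt_def using w_pos by (simp add: field_simps)
    then show ?thesis
      using True unfolding weight_ratio_def by simp
  qed
qed

definition inv_deg_sum :: "'a set \<Rightarrow> real" where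
  "inv_deg_sum e = (\<Sum>x\<in>e. 1 / real (deg E x))"

lemma inv_deg_sum_ge: "e \<in> E \<Longrightarrow> 2 / \<Delta> \<le> inv_deg_sum e"
proof -
  assume e: "e \<in> E"
  have "1 / \<Delta> \<le> 1 / real (deg E x)" if "x \<in> e" for x
    using deg_bounds[OF e that] by (simp add: divide_le_eq_1 frac_le)
  then have "(\<Sum>x\<in>e. 1 / \<Delta>) \<le> inv_deg_sum e"
    unfolding inv_deg_sum_def by (rule sum_mono)
  then show ?thesis
    using card_edge[OF e] by simp
qed

lemma inv_deg_sum_nonneg: "0 \<le> inv_deg_sum e"
  unfolding inv_deg_sum_def by (intro sum_nonneg) simp

text \<open>The factor \<open>w\<^bsup>1[e \<notin> A \<oplus> M]\<^esup>\<close> of the transition probabilities is the Metropolis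
  acceptance probability \<open>min 1 (\<lambda>(A \<oplus> e) / \<lambda>(A))\<close>.\<close>

lemma acceptance_eq: "(if e \<notin> symdiff A M then w else 1) = min 1 (weight_ratio A e)"
  unfolding weight_ratio_def using w_pos w_less_1 by (auto simp: one_le_inverse)

lemma worm_off_toggle:
  assumes "A \<in> worm_space V E" "toggle A e \<in> worm_space V E" "e \<in> E"
  shows "worm_off V E w M A (toggle A e) =
    (if A \<in> Ck V E 0 then min 1 (weight_ratio A e) * inv_deg_sum e / (2 * real (card V))
     else if toggle A e \<in> Ck V E 0 then min 1 (weight_ratio A e) * inv_deg_sum e / 4
     else let u = the_elem (e \<inter> bdry V A); v = the_elem (e - {u}) in
       min (real (deg E u) / real (deg E v) * weight_ratio A e) 1 / (4 * real (deg E u)))"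
proof -
  have "\<exists>e'\<in>E. symdiff A (toggle A e) = {e'}"
    using assms(3) by (simp add: symdiff_toggle)
  then have transition: "A \<in> worm_space V E \<and> toggle A e \<in> worm_space V E \<and> (\<exists>e'\<in>E. symdiff A (toggle A e) = {e'})"
    using assms(1,2) by blast
  show ?thesis
    unfolding worm_off_def
    by (simp only: if_P[OF transition])
       (simp add: symdiff_toggle Let_def acceptance_eq weight_ratio_def[symmetric]
         inv_deg_sum_def[symmetric])
qed

lemma worm_off_nonneg: "0 \<le> worm_off V E w M A B"
  unfolding worm_off_def Let_def using w_pos
  by (auto intro!: mult_nonneg_nonneg sum_nonneg divide_nonneg_nonneg)

lemma worm_off_eq_0:
  assumes "\<not> (\<exists>e\<in>E. B = toggle A e)"
  shows "worm_off V E w M A B = 0"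
  using assms toggle_eq_if_symdiff unfolding worm_off_def by metis

lemma worm_transition_cases [consumes 3, case_names open_worm close_worm move_defect]:
  assumes A: "A \<in> worm_space V E" and B: "toggle A e \<in> worm_space V E" and e: "e \<in> E"
  obtains (open_worm) "A \<in> Ck V E 0" "toggle A e \<notin> Ck V E 0"
      "worm_off V E w M A (toggle A e) = min 1 (weight_ratio A e) * inv_deg_sum e / (2 * real (card V))"
    | (close_worm) "A \<notin> Ck V E 0" "toggle A e \<in> Ck V E 0" "bdry V A = e"
      "worm_off V E w M A (toggle A e) = min 1 (weight_ratio A e) * inv_deg_sum e / 4"
    | (move_defect) u v where "e = {u, v}" "u \<noteq> v" "e \<inter> bdry V A = {u}" "e \<inter> bdry V (toggle A e) = {v}"
      "A \<notin> Ck V E 0" "toggle A e \<notin> Ck V E 0"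
      "worm_off V E w M A (toggle A e) = min (weight_ratio A e / real (deg E v)) (1 / real (deg E u)) / 4"
proof -
  have bdry_B: "bdry V (toggle A e) = symdiff (bdry V A) e"
    using A e by (simp add: bdry_toggle worm_space_iff)
  consider "A \<in> Ck V E 0" | "A \<notin> Ck V E 0" "toggle A e \<in> Ck V E 0" | "A \<notin> Ck V E 0" "toggle A e \<notin> Ck V E 0"
    by blast
  then show ?thesis
  proof cases
    case 1
    then have "bdry V (toggle A e) = e"
      using bdry_B by (simp add: Ck_0_iff)
    then have "toggle A e \<notin> Ck V E 0"
      using card_edge[OF e] by (auto simp: Ck_0_iff)
    then show ?thesis
      using 1 open_worm worm_off_toggle[OF A B e] by simp
  next
    case 2
    then have "bdry V A = e"
      using bdry_B unfolding Ck_0_iff symdiff_def by blast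
    then show ?thesis
      using 2 close_worm worm_off_toggle[OF A B e] by simp
  next
    case 3
    then obtain u v where uv: "e = {u, v}" "u \<noteq> v" and u: "e \<inter> bdry V A = {u}"
      and v: "e \<inter> bdry V (toggle A e) = {v}"
      using toggle_moves_defect[OF A _ B _ e] by blast
    have "the_elem (e \<inter> bdry V A) = u" "the_elem (e - {u}) = v"
      using u uv by auto
    moreover have "real (deg E u) > 0" "real (deg E v) > 0"
      using deg_bounds[OF e, of u] deg_bounds[OF e, of v] uv by auto
    ultimately have "worm_off V E w M A (toggle A e)
        = min (weight_ratio A e / real (deg E v)) (1 / real (deg E u)) / 4"
      using 3 worm_off_toggle[OF A B e] by (simp add: min_divide_distrib_right field_simps)
    then show ?thesis
      using 3 move_defect u uv v by blast
  qed
qed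

definition Psi :: "'a set set \<Rightarrow> real" where
  "Psi A = (if A \<in> Ck V E 0 then real (card V) else 2)"

text \<open>The unnormalised Prokof'ev--Svistunov measure; the normalisation cancels everywhere.\<close>

definition ps_weight :: "'a set set \<Rightarrow> real" where
  "ps_weight A = Psi A * wt w M A"

lemma Psi_pos: "0 < Psi A"
  unfolding Psi_def using card_vertices_ge_2 by auto

lemma ps_weight_pos: "0 < ps_weight A"
  unfolding ps_weight_def using wt_pos[OF w_pos, of M A] Psi_pos[of A] by simp

lemma ps_weight_reversible_open:
  assumes A: "A \<in> Ck V E 0" and B: "toggle A e \<in> worm_space V E" and e: "e \<in> E"
  shows "ps_weight A * worm_off V E w M A (toggle A e) = ps_weight (toggle A e) * worm_off V E w M (toggle A e) A"
proof -
  let ?r = "weight_ratio A e"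
  have AW: "A \<in> worm_space V E"
    using A by (simp add: worm_space_def)
  have off: "worm_off V E w M A (toggle A e) = min 1 ?r * inv_deg_sum e / (2 * real (card V))"
    and B0: "toggle A e \<notin> Ck V E 0"
    by (cases rule: worm_transition_cases[OF AW B e]; use A in simp)+
  have off_back: "worm_off V E w M (toggle A e) A = min 1 (inverse ?r) * inv_deg_sum e / 4"
    by (cases rule: worm_transition_cases[OF B _ e]; use AW A B0 in \<open>simp add: weight_ratio_toggle\<close>)
  have "?r * min 1 (inverse ?r) = min ?r 1"
    using weight_ratio_pos[of A e] by (simp add: min_mult_distrib_left)
  then show ?thesis
    unfolding ps_weight_def Psi_def off off_back
    using A B0 wt_toggle[of A e] AW card_vertices_ge_2
    by (simp add: worm_space_iff field_simps min.commute)
qed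

lemma ps_weight_reversible_toggle:
  assumes A: "A \<in> worm_space V E" and B: "toggle A e \<in> worm_space V E" and e: "e \<in> E"
  shows "ps_weight A * worm_off V E w M A (toggle A e) = ps_weight (toggle A e) * worm_off V E w M (toggle A e) A"
  using A B e
proof (cases rule: worm_transition_cases)
  case open_worm
  then show ?thesis
    using ps_weight_reversible_open B e by blast
next
  case close_worm
  then show ?thesis
    using ps_weight_reversible_open[of "toggle A e" e] A e by simp
next
  case (move_defect u v)
  let ?r = "weight_ratio A e"
  have off_back: "worm_off V E w M (toggle A e) A
      = min (inverse ?r / real (deg E u)) (1 / real (deg E v)) / 4"
  proof -
    have "toggle (toggle A e) e \<in> worm_space V E"
      using A by simp
    from B this e show ?thesis
    proof (cases rule: worm_transition_cases)
      case (move_defect u' v')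
      then have "u' = v" "v' = u"
        using \<open>e \<inter> bdry V (toggle A e) = {v}\<close> \<open>e \<inter> bdry V A = {u}\<close> by auto
      then show ?thesis
        using move_defect by (simp add: weight_ratio_toggle)
    qed (use move_defect in simp_all)
  qed
  have "?r * min (inverse ?r / real (deg E u)) (1 / real (deg E v))
      = min (1 / real (deg E u)) (?r / real (deg E v))"
    using weight_ratio_pos[of A e] by (simp add: min_mult_distrib_left)
  then show ?thesis
    unfolding ps_weight_def Psi_def move_defect(7) off_back
    using move_defect wt_toggle[of A e] A by (simp add: worm_space_iff min.commute)
qed

lemma worm_off_toggle_ge:
  assumes A: "A \<in> worm_space V E" and B: "toggle A e \<in> worm_space V E" and e: "e \<in> E"
  shows "w / (2 * Psi A * \<Delta>) \<le> worm_off V E w M A (toggle A e)"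
proof -
  have "w * (2 / \<Delta>) \<le> min 1 (weight_ratio A e) * inv_deg_sum e"
    using weight_ratio_ge[of A e] w_less_1 w_pos inv_deg_sum_ge[OF e] max_degree_ge_1
    by (intro mult_mono) auto
  then have "w / \<Delta> \<le> min 1 (weight_ratio A e) * inv_deg_sum e / 2"
    using divide_right_mono[of _ _ 2] by fastforce
  moreover have "w / (2 * \<Delta>) \<le> w / \<Delta>"
    using w_pos max_degree_ge_1 by (simp add: divide_left_mono)
  ultimately have start: "w / (2 * \<Delta>) \<le> min 1 (weight_ratio A e) * inv_deg_sum e / 2"
    by linarith
  from A B e show ?thesis
  proof (cases rule: worm_transition_cases)
    case open_worm
    have "w / (2 * real (card V) * \<Delta>) = (w / (2 * \<Delta>)) / real (card V)"
      by simp
    also have "\<dots> \<le> (min 1 (weight_ratio A e) * inv_deg_sum e / 2) / real (card V)"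
      using start by (rule divide_right_mono) simp
    finally show ?thesis
      using open_worm by (simp add: Psi_def)
  next
    case close_worm
    have "w / (2 * 2 * \<Delta>) = (w / (2 * \<Delta>)) / 2"
      by simp
    also have "\<dots> \<le> (min 1 (weight_ratio A e) * inv_deg_sum e / 2) / 2"
      using start by (rule divide_right_mono) simp
    finally show ?thesis
      using close_worm by (simp add: Psi_def)
  next
    case (move_defect u v)
    have "w / \<Delta> \<le> weight_ratio A e / real (deg E v)" "w / \<Delta> \<le> 1 / real (deg E u)"
      using deg_bounds[OF e, of u] deg_bounds[OF e, of v] weight_ratio_ge[of A e] w_pos w_less_1
        move_defect(1) by (auto intro!: frac_le)
    then show ?thesis
      using move_defect by (simp add: Psi_def field_simps)
  qed
qed

lemma ps_weight_worm_off_ge: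
  assumes "A \<in> worm_space V E" "toggle A e \<in> worm_space V E" "e \<in> E"
  shows "w * wt w M A / (2 * \<Delta>) \<le> ps_weight A * worm_off V E w M A (toggle A e)"
proof -
  have "w * wt w M A / (2 * \<Delta>) = Psi A * wt w M A * (w / (2 * Psi A * \<Delta>))"
    using Psi_pos[of A] by (simp add: field_simps)
  also have "\<dots> \<le> ps_weight A * worm_off V E w M A (toggle A e)"
    unfolding ps_weight_def using Psi_pos[of A] wt_pos[OF w_pos, of M A]
    by (intro mult_left_mono worm_off_toggle_ge[OF assms]) auto
  finally show ?thesis .
qed

definition exit_bound :: "'a set set \<Rightarrow> 'a set \<Rightarrow> real" where
  "exit_bound A e = (if A \<in> Ck V E 0 then inv_deg_sum e / (2 * real (card V))
                     else (\<Sum>x\<in>e \<inter> bdry V A. 1 / (4 * real (deg E x))))"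

lemma exit_bound_nonneg: "0 \<le> exit_bound A e"
  unfolding exit_bound_def using inv_deg_sum_nonneg by (auto intro!: sum_nonneg)

lemma worm_off_le_exit_bound:
  assumes "A \<in> worm_space V E" "toggle A e \<in> worm_space V E" "e \<in> E"
  shows "worm_off V E w M A (toggle A e) \<le> exit_bound A e"
proof -
  have accept: "min 1 (weight_ratio A e) * inv_deg_sum e \<le> inv_deg_sum e"
    using inv_deg_sum_nonneg weight_ratio_pos[of A e] by (intro mult_left_le_one_le) auto
  from assms show ?thesis
  proof (cases rule: worm_transition_cases)
    case open_worm
    then show ?thesis
      unfolding exit_bound_def using accept by (simp add: divide_right_mono)
  next
    case close_worm
    then have "exit_bound A e = inv_deg_sum e / 4"
      unfolding exit_bound_def inv_deg_sum_def by (simp add: sum_divide_distrib mult.commute)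
    then show ?thesis
      using close_worm accept by simp
  next
    case (move_defect u v)
    then have "exit_bound A e = 1 / (4 * real (deg E u))"
      unfolding exit_bound_def by simp
    then show ?thesis
      using move_defect by simp
  qed
qed

lemma sum_exit_bound_le:
  assumes A: "A \<in> worm_space V E"
  shows "(\<Sum>e\<in>E. exit_bound A e) \<le> 1/2"
proof (cases "A \<in> Ck V E 0")
  case True
  have "(\<Sum>e\<in>E. exit_bound A e) = (\<Sum>e\<in>E. \<Sum>x\<in>e \<inter> V. 1 / real (deg E x)) / (2 * real (card V))"
    unfolding exit_bound_def inv_deg_sum_def using True edge_subset
    by (simp add: sum_divide_distrib Int_absorb2)
  also have "\<dots> = (\<Sum>x\<in>V. real (deg E x) * (1 / real (deg E x))) / (2 * real (card V))"
    by (simp only: sum_edges_swap[OF order_refl])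
  also have "\<dots> \<le> (\<Sum>x\<in>V. 1) / (2 * real (card V))"
    by (intro divide_right_mono sum_mono) auto
  also have "\<dots> = 1/2"
    using card_vertices_ge_2 by simp
  finally show ?thesis .
next
  case False
  have "(\<Sum>e\<in>E. exit_bound A e) = (\<Sum>x\<in>bdry V A. real (deg E x) * (1 / (4 * real (deg E x))))"
    unfolding exit_bound_def using False sum_edges_swap[OF bdry_subset] by simp
  also have "\<dots> \<le> (\<Sum>x\<in>bdry V A. 1/4)"
    by (intro sum_mono) simp
  also have "\<dots> = 1/2"
    using card_bdry_worm_space[OF A False] by simp
  finally show ?thesis .
qed

lemma sum_worm_off_le:
  assumes A: "A \<in> worm_space V E"
  shows "(\<Sum>C\<in>worm_space V E - {A}. worm_off V E w M A C) \<le> 1/2"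
proof -
  define EA where "EA = {e \<in> E. toggle A e \<in> worm_space V E}"
  have "toggle A ` EA \<subseteq> worm_space V E - {A}"
    unfolding EA_def using toggle_neq by fastforce
  moreover have "worm_off V E w M A C = 0" if "C \<in> worm_space V E - {A} - toggle A ` EA" for C
    using that by (intro worm_off_eq_0) (auto simp: EA_def)
  ultimately have "(\<Sum>C\<in>worm_space V E - {A}. worm_off V E w M A C) = (\<Sum>C\<in>toggle A ` EA. worm_off V E w M A C)"
    using finite_worm_space by (intro sum.mono_neutral_right) auto
  also have "\<dots> = (\<Sum>e\<in>EA. worm_off V E w M A (toggle A e))"
    by (rule sum.reindex[unfolded comp_def]) (simp add: inj_on_def toggle_eq_iff)
  also have "\<dots> \<le> (\<Sum>e\<in>EA. exit_bound A e)"
    by (intro sum_mono worm_off_le_exit_bound[OF A]) (auto simp: EA_def)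
  also have "\<dots> \<le> (\<Sum>e\<in>E. exit_bound A e)"
    using finite_edges exit_bound_nonneg by (intro sum_mono2) (auto simp: EA_def)
  also have "\<dots> \<le> 1/2"
    by (rule sum_exit_bound_le[OF A])
  finally show ?thesis .
qed

lemma worm_P_reversible:
  assumes A: "A \<in> worm_space V E" and C: "C \<in> worm_space V E"
  shows "ps_weight A * worm_P V E w M A C = ps_weight C * worm_P V E w M C A"
proof (cases "A = C")
  case False
  then have P: "worm_P V E w M A C = worm_off V E w M A C" "worm_P V E w M C A = worm_off V E w M C A"
    unfolding worm_P_def by auto
  show ?thesis
  proof (cases "\<exists>e\<in>E. C = toggle A e")
    case True
    then show ?thesis
      using ps_weight_reversible_toggle A C unfolding P by auto
  next
    case False
    then have "\<not> (\<exists>e\<in>E. A = toggle C e)"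
      by auto
    then show ?thesis
      unfolding P using False worm_off_eq_0 by simp
  qed
qed simp

sublocale chain: reversible_lazy_chain "worm_space V E" "worm_P V E w M" ps_weight
proof
  fix A assume A: "A \<in> worm_space V E"
  have "(\<Sum>C\<in>worm_space V E - {A}. worm_P V E w M A C) = (\<Sum>C\<in>worm_space V E - {A}. worm_off V E w M A C)"
    by (intro sum.cong) (auto simp: worm_P_def)
  then have "(\<Sum>C\<in>worm_space V E. worm_P V E w M A C)
      = worm_P V E w M A A + (\<Sum>C\<in>worm_space V E - {A}. worm_off V E w M A C)"
    using A finite_worm_space by (simp add: sum.remove)
  then show "(\<Sum>C\<in>worm_space V E. worm_P V E w M A C) = 1"
    by (simp add: worm_P_def)
  show "1/2 \<le> worm_P V E w M A A"
    using sum_worm_off_le[OF A] by (simp add: worm_P_def)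
qed (use finite_worm_space ps_weight_pos worm_off_nonneg worm_P_reversible in \<open>auto simp: worm_P_def\<close>)

end

section \<open>Poincare inequality by canonical paths\<close>

lemma sum_weighted_sq_le_centered:
  fixes p g :: "'b \<Rightarrow> real"
  assumes "finite S" "\<And>x. x \<in> S \<Longrightarrow> 0 \<le> p x" "(\<Sum>x\<in>S. p x * g x) = 0"
  shows "(\<Sum>x\<in>S. p x * (g x)^2) \<le> (\<Sum>x\<in>S. p x * (g x - m)^2)"
proof -
  have "(\<Sum>x\<in>S. p x * (g x - m)^2) = (\<Sum>x\<in>S. p x * (g x)^2) - 2 * m * (\<Sum>x\<in>S. p x * g x) + m^2 * (\<Sum>x\<in>S. p x)"
    by (simp add: power2_eq_square algebra_simps sum.distrib sum_subtractf sum_distrib_left)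
  then show ?thesis
    using assms sum_nonneg[of S p] by simp
qed

lemma sq_weighted_mean_le:
  fixes p f :: "'b \<Rightarrow> real"
  assumes "finite S" "\<And>x. x \<in> S \<Longrightarrow> 0 \<le> p x" "(\<Sum>x\<in>S. p x) = 1"
  shows "(\<Sum>x\<in>S. p x * f x)^2 \<le> (\<Sum>x\<in>S. p x * (f x)^2)"
proof -
  have "S \<noteq> {}"
    using assms(3) by auto
  then show ?thesis
    using convex_on_sum[OF assms(1) _ convex_power2 assms(3), of f] assms(2) by simp
qed

lemma wt_symdiff_swap:
  assumes fin: "finite I" "finite J" "finite M" and S: "S \<subseteq> symdiff I J"
  shows "wt w M I * wt w M J = wt w M (symdiff J S) * wt w M (symdiff I S)"
proof -
  define U where "U = I \<union> J \<union> M"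
  have card_U: "card X = (\<Sum>e\<in>U. if e \<in> X then 1 else 0)" if "X \<subseteq> U" for X
  proof -
    have "finite U"
      using fin by (simp add: U_def)
    then have "(\<Sum>e\<in>U. if e \<in> X then 1 else 0) = card (U \<inter> X)"
      by (simp add: sum.If_cases Int_def)
    then show ?thesis
      using that by (simp add: Int_absorb1)
  qed
  have "symdiff I M \<subseteq> U" "symdiff J M \<subseteq> U" "symdiff (symdiff J S) M \<subseteq> U" "symdiff (symdiff I S) M \<subseteq> U"
    using S unfolding U_def symdiff_def by blast+
  moreover have "(if e \<in> symdiff I M then 1 else 0::nat) + (if e \<in> symdiff J M then 1 else 0)
      = (if e \<in> symdiff (symdiff J S) M then 1 else 0) + (if e \<in> symdiff (symdiff I S) M then 1 else 0)" for e
  proof -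
    have "e \<in> S \<Longrightarrow> (e \<in> I) \<noteq> (e \<in> J)"
      using S unfolding symdiff_def by blast
    then show ?thesis
      by (cases "e \<in> S"; cases "e \<in> I"; cases "e \<in> J"; cases "e \<in> M") (simp_all add: symdiff_def)
  qed
  ultimately have "card (symdiff I M) + card (symdiff J M)
      = card (symdiff (symdiff J S) M) + card (symdiff (symdiff I S) M)"
    by (simp add: card_U sum.distrib[symmetric])
  then show ?thesis
    unfolding wt_def by (metis power_add)
qed

context worm_chain
begin

abbreviation lambda_Ck :: "nat \<Rightarrow> real" where
  "lambda_Ck k \<equiv> wtS w M (Ck V E k)"

lemma lambda_Ck_nonneg: "0 \<le> lambda_Ck k"
  unfolding wtS_def by (intro sum_nonneg less_imp_le wt_pos w_pos)

lemma lambda_Ck_0_pos: "0 < lambda_Ck 0"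
proof -
  have "{} \<in> Ck V E 0"
    by (simp add: Ck_def)
  then have "wt w M {} \<le> lambda_Ck 0"
    unfolding wtS_def using finite_Ck wt_pos[OF w_pos]
    by (intro member_le_sum) (auto intro: less_imp_le)
  then show ?thesis
    using wt_pos[OF w_pos, of M "{}"] by linarith
qed

lemma wt_path_swap:
  assumes "I \<in> worm_space V E" "J \<in> Ck V E 0"
  shows "wt w M I * wt w M J = wt w M (path_state I J k) * wt w M (path_complement I J k)"
  unfolding path_state_def path_complement_def
  using endpoints_subset[OF assms] finite_subgraph finite_subgraph[OF M_subset]
  by (intro wt_symdiff_swap path_edges_subset[OF assms]) auto

text \<open>A bound for \<open>Psi\<close> of the endpoint that depends only on the complementary subgraph,
  over which the congestion sum runs.\<close>

definition Phi :: "'a set set \<Rightarrow> real" where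
  "Phi A = (if card (bdry V A) \<le> 2 then real (card V) else 2)"

lemma Psi_le_Phi_path_complement:
  assumes "I \<in> worm_space V E" "J \<in> Ck V E 0"
  shows "Psi I \<le> Phi (path_complement I J k)"
  using card_bdry_path_complement_gt_2[OF assms, of k] card_vertices_ge_2
  unfolding Psi_def Phi_def by auto

lemma sum_Phi_wt:
  "(\<Sum>A\<in>Ck V E 0 \<union> Ck V E 2 \<union> Ck V E 4. Phi A * wt w M A)
     = real (card V) * (lambda_Ck 0 + lambda_Ck 2) + 2 * lambda_Ck 4"
proof -
  have "Ck V E 0 \<inter> Ck V E 2 = {}" "(Ck V E 0 \<union> Ck V E 2) \<inter> Ck V E 4 = {}"
    unfolding Ck_def by auto
  then have "(\<Sum>A\<in>Ck V E 0 \<union> Ck V E 2 \<union> Ck V E 4. Phi A * wt w M A)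
      = (\<Sum>A\<in>Ck V E 0. Phi A * wt w M A) + (\<Sum>A\<in>Ck V E 2. Phi A * wt w M A)
        + (\<Sum>A\<in>Ck V E 4. Phi A * wt w M A)"
    using finite_Ck by (simp add: sum.union_disjoint)
  also have "\<dots> = real (card V) * lambda_Ck 0 + real (card V) * lambda_Ck 2 + 2 * lambda_Ck 4"
    unfolding wtS_def sum_distrib_left by (intro arg_cong2[where f = "(+)"] sum.cong) (auto simp: Phi_def Ck_def)
  finally show ?thesis
    by (simp add: algebra_simps)
qed

definition path_steps :: "('a set set \<times> 'a set set \<times> nat) set" where
  "path_steps = (SIGMA I:worm_space V E. SIGMA J:Ck V E 0. {..<path_length I J})"

definition path_transition :: "'a set set \<times> 'a set set \<times> nat \<Rightarrow> 'a set set \<times> 'a set set" where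
  "path_transition = (\<lambda>(I, J, k). (path_state I J k, path_state I J (Suc k)))"

definition path_congestion :: real where
  "path_congestion = 2 * \<Delta> / (w * lambda_Ck 0) * (real (card V) * (lambda_Ck 0 + lambda_Ck 2) + 2 * lambda_Ck 4)"

lemma path_congestion_pos: "0 < path_congestion"
  unfolding path_congestion_def using max_degree_ge_1 w_pos lambda_Ck_0_pos lambda_Ck_nonneg card_vertices_ge_2
  by (intro mult_pos_pos divide_pos_pos add_pos_nonneg) auto

lemma finite_path_steps: "finite path_steps"
  unfolding path_steps_def using finite_worm_space finite_Ck by (auto intro!: finite_SigmaI)

lemma path_transition_in_worm_space: "t \<in> path_steps \<Longrightarrow> path_transition t \<in> worm_space V E \<times> worm_space V E"
  unfolding path_steps_def path_transition_def using path_state_in_worm_space by auto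

lemma sum_Phi_path_complement_le:
  "(\<Sum>(I, J, k)\<in>{t \<in> path_steps. path_transition t = (Z, Z')}. Phi (path_complement I J k) * wt w M (path_complement I J k))
     \<le> real (card V) * (lambda_Ck 0 + lambda_Ck 2) + 2 * lambda_Ck 4"
proof -
  let ?F = "{t \<in> path_steps. path_transition t = (Z, Z')}"
  let ?\<eta> = "\<lambda>(I, J, k). path_complement I J k"
  have "inj_on ?\<eta> ?F"
  proof (rule inj_onI)
    fix s t assume s: "s \<in> ?F" and t: "t \<in> ?F" and eq: "?\<eta> s = ?\<eta> t"
    obtain I J k I' J' k' where st: "s = (I, J, k)" "t = (I', J', k')"
      by (cases s, cases t) auto
    show "s = t"
      using s t eq path_injective[of I J k I' J' k'] unfolding st path_steps_def path_transition_def by auto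
  qed
  moreover have "?\<eta> ` ?F \<subseteq> Ck V E 0 \<union> Ck V E 2 \<union> Ck V E 4"
    unfolding path_steps_def using path_complement_in_Ck by auto
  moreover have "0 \<le> Phi A * wt w M A" for A
    unfolding Phi_def using wt_pos[OF w_pos, of M A] by simp
  ultimately have "(\<Sum>A\<in>?\<eta> ` ?F. Phi A * wt w M A) \<le> (\<Sum>A\<in>Ck V E 0 \<union> Ck V E 2 \<union> Ck V E 4. Phi A * wt w M A)"
    using finite_Ck by (intro sum_mono2) auto
  with \<open>inj_on ?\<eta> ?F\<close> show ?thesis
    by (simp add: sum.reindex case_prod_unfold sum_Phi_wt)
qed

lemma worm_P_toggle: "worm_P V E w M A (toggle A e) = worm_off V E w M A (toggle A e)"
  using toggle_neq[of A e] unfolding worm_P_def by simp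

lemma worm_P_nonneg: "A \<in> worm_space V E \<Longrightarrow> 0 \<le> worm_P V E w M A C"
  using chain.lazy[of A] worm_off_nonneg by (cases "A = C") (auto simp: worm_P_def)

lemma path_step_transition_ge:
  assumes "(I, J, k) \<in> path_steps"
  shows "w * wt w M (path_state I J k) / (2 * \<Delta>)
    \<le> ps_weight (path_state I J k) * worm_P V E w M (path_state I J k) (path_state I J (Suc k))"
proof -
  have I: "I \<in> worm_space V E" and J: "J \<in> Ck V E 0" and k: "k < path_length I J"
    using assms unfolding path_steps_def by auto
  have step: "path_state I J (Suc k) = toggle (path_state I J k) (canonical_order (symdiff I J) ! k)"
    by (rule path_state_Suc[OF I J k])
  show ?thesis
    using ps_weight_worm_off_ge[OF path_state_in_worm_space[OF I J] _ path_step_edge[OF I J k]]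
      path_state_in_worm_space[OF I J, of "Suc k"]
    unfolding step by (simp add: worm_P_toggle)
qed

lemma path_step_weight_le:
  assumes "(I, J, k) \<in> path_steps"
  shows "ps_weight I * wt w M J
    \<le> wt w M (path_state I J k) * (Phi (path_complement I J k) * wt w M (path_complement I J k))"
proof -
  have I: "I \<in> worm_space V E" and J: "J \<in> Ck V E 0"
    using assms unfolding path_steps_def by auto
  have "ps_weight I * wt w M J = Psi I * (wt w M (path_state I J k) * wt w M (path_complement I J k))"
    unfolding ps_weight_def wt_path_swap[OF I J, symmetric] by (simp add: mult.assoc)
  also have "\<dots> \<le> Phi (path_complement I J k) * (wt w M (path_state I J k) * wt w M (path_complement I J k))"
    using Psi_le_Phi_path_complement[OF I J] wt_pos[OF w_pos, of M "path_state I J k"]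
      wt_pos[OF w_pos, of M "path_complement I J k"]
    by (intro mult_right_mono) auto
  finally show ?thesis
    by (simp add: mult_ac)
qed

lemma congestion_bound:
  assumes Z: "Z \<in> worm_space V E"
  shows "(\<Sum>(I, J, k)\<in>{t \<in> path_steps. path_transition t = (Z, Z')}. ps_weight I * wt w M J / lambda_Ck 0)
     \<le> path_congestion * (ps_weight Z * worm_P V E w M Z Z')"
proof (cases "{t \<in> path_steps. path_transition t = (Z, Z')} = {}")
  case True
  show ?thesis
    unfolding True sum.empty using path_congestion_pos ps_weight_pos[of Z] worm_P_nonneg[OF Z, of Z'] by simp
next
  case False
  let ?F = "{t \<in> path_steps. path_transition t = (Z, Z')}"
  let ?X = "real (card V) * (lambda_Ck 0 + lambda_Ck 2) + 2 * lambda_Ck 4"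
  have "(\<Sum>(I, J, k)\<in>?F. ps_weight I * wt w M J / lambda_Ck 0)
      \<le> (\<Sum>(I, J, k)\<in>?F. wt w M Z / lambda_Ck 0 * (Phi (path_complement I J k) * wt w M (path_complement I J k)))"
    using path_step_weight_le lambda_Ck_0_pos
    by (intro sum_mono) (auto simp: path_transition_def divide_right_mono mult_ac)
  also have "\<dots> = wt w M Z / lambda_Ck 0 * (\<Sum>(I, J, k)\<in>?F. Phi (path_complement I J k) * wt w M (path_complement I J k))"
    by (simp add: sum_distrib_left case_prod_unfold)
  also have "\<dots> \<le> wt w M Z / lambda_Ck 0 * ?X"
    using sum_Phi_path_complement_le lambda_Ck_0_pos wt_pos[OF w_pos, of M Z] by (intro mult_left_mono) auto
  also have "\<dots> = path_congestion * (w * wt w M Z / (2 * \<Delta>))"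
    using max_degree_ge_1 w_pos lambda_Ck_0_pos by (simp add: path_congestion_def field_simps)
  also have "\<dots> \<le> path_congestion * (ps_weight Z * worm_P V E w M Z Z')"
    using False path_step_transition_ge path_congestion_pos
    by (intro mult_left_mono) (auto simp: path_transition_def)
  finally show ?thesis .
qed

lemma sum_path_steps_le:
  "(\<Sum>(I, J, k)\<in>path_steps. ps_weight I * wt w M J / lambda_Ck 0 * (g (path_state I J (Suc k)) - g (path_state I J k))^2)
     \<le> path_congestion * (\<Sum>x\<in>worm_space V E. \<Sum>y\<in>worm_space V E. ps_weight x * worm_P V E w M x y * (g x - g y)^2)"
proof -
  let ?W = "worm_space V E"
  let ?H = "\<lambda>(I, J, k). ps_weight I * wt w M J / lambda_Ck 0"
  let ?G = "\<lambda>(I, J, k). ps_weight I * wt w M J / lambda_Ck 0 * (g (path_state I J (Suc k)) - g (path_state I J k))^2"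
  have fiber: "(\<Sum>t\<in>{t \<in> path_steps. path_transition t = (Z, Z')}. ?G t)
      = (\<Sum>t\<in>{t \<in> path_steps. path_transition t = (Z, Z')}. ?H t) * (g Z - g Z')^2" for Z Z'
    unfolding sum_distrib_right
    by (intro sum.cong) (auto simp: path_transition_def power2_commute)
  have "path_transition ` path_steps \<subseteq> ?W \<times> ?W"
    using path_transition_in_worm_space by blast
  then have "(\<Sum>t\<in>path_steps. ?G t) = (\<Sum>q\<in>?W \<times> ?W. \<Sum>t\<in>{t \<in> path_steps. path_transition t = q}. ?G t)"
    using finite_worm_space by (intro sum.group[symmetric] finite_path_steps) auto
  also have "\<dots> \<le> (\<Sum>(x, y)\<in>?W \<times> ?W. path_congestion * (ps_weight x * worm_P V E w M x y) * (g x - g y)^2)"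
  proof (rule sum_mono)
    fix q assume "q \<in> ?W \<times> ?W"
    then obtain Z Z' where q: "q = (Z, Z')" and Z: "Z \<in> ?W"
      by auto
    show "(\<Sum>t\<in>{t \<in> path_steps. path_transition t = q}. ?G t)
        \<le> (case q of (x, y) \<Rightarrow> path_congestion * (ps_weight x * worm_P V E w M x y) * (g x - g y)^2)"
      unfolding q prod.case fiber by (intro mult_right_mono congestion_bound[OF Z]) auto
  qed
  also have "\<dots> = path_congestion * (\<Sum>x\<in>?W. \<Sum>y\<in>?W. ps_weight x * worm_P V E w M x y * (g x - g y)^2)"
    by (simp add: sum.cartesian_product[symmetric] sum_distrib_left mult_ac)
  finally show ?thesis .
qed

lemma sq_diff_le_path_sum:
  assumes "I \<in> worm_space V E" "J \<in> Ck V E 0"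
  shows "(g I - g J)^2 \<le> real (card E) * (\<Sum>k<path_length I J. (g (path_state I J (Suc k)) - g (path_state I J k))^2)"
proof -
  have "(\<Sum>k<path_length I J. g (path_state I J (Suc k)) - g (path_state I J k)) = g I - g J"
    using sum_lessThan_telescope[of "\<lambda>k. g (path_state I J k)"] path_state_length[OF assms]
    by (simp add: path_state_0)
  then have "(g I - g J)^2 \<le> (\<Sum>k<path_length I J. (g (path_state I J (Suc k)) - g (path_state I J k))^2) * real (path_length I J)"
    using sum_squared_le_sum_of_squares[of _ "{..<path_length I J}"] by (metis card_lessThan)
  also have "\<dots> \<le> (\<Sum>k<path_length I J. (g (path_state I J (Suc k)) - g (path_state I J k))^2) * real (card E)"
    using path_length_le[OF assms] by (intro mult_left_mono sum_nonneg) auto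
  finally show ?thesis
    by (simp add: mult.commute)
qed

lemma sum_sq_le_path_steps:
  assumes orth: "(\<Sum>x\<in>worm_space V E. ps_weight x * g x) = 0"
  shows "(\<Sum>x\<in>worm_space V E. ps_weight x * (g x)^2)
    \<le> real (card E) * (\<Sum>(I, J, k)\<in>path_steps. ps_weight I * wt w M J / lambda_Ck 0 * (g (path_state I J (Suc k)) - g (path_state I J k))^2)"
proof -
  let ?W = "worm_space V E" and ?C0 = "Ck V E 0"
  define p where "p J = wt w M J / lambda_Ck 0" for J
  define D where "D I J = (\<Sum>k<path_length I J. (g (path_state I J (Suc k)) - g (path_state I J k))^2)" for I J
  have p_nonneg: "0 \<le> p J" for J
    unfolding p_def using wt_pos[OF w_pos, of M J] lambda_Ck_0_pos by simp
  have p_sum: "(\<Sum>J\<in>?C0. p J) = 1"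
    unfolding p_def using lambda_Ck_0_pos by (simp add: sum_divide_distrib[symmetric] wtS_def)
  define m where "m = (\<Sum>J\<in>?C0. p J * g J)"
  have "(\<Sum>x\<in>?W. ps_weight x * (g x)^2) \<le> (\<Sum>I\<in>?W. ps_weight I * (g I - m)^2)"
    using finite_worm_space ps_weight_pos orth by (intro sum_weighted_sq_le_centered less_imp_le)
  also have "\<dots> \<le> (\<Sum>I\<in>?W. ps_weight I * (\<Sum>J\<in>?C0. p J * (g I - g J)^2))"
  proof (intro sum_mono mult_left_mono)
    fix I
    have "g I - m = (\<Sum>J\<in>?C0. p J * (g I - g J))"
      unfolding m_def using p_sum by (simp add: algebra_simps sum_subtractf sum_distrib_left[symmetric])
    then show "(g I - m)^2 \<le> (\<Sum>J\<in>?C0. p J * (g I - g J)^2)"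
      using sq_weighted_mean_le[OF finite_Ck p_nonneg p_sum] by simp
  qed (use ps_weight_pos less_imp_le in auto)
  also have "\<dots> \<le> (\<Sum>I\<in>?W. ps_weight I * (\<Sum>J\<in>?C0. p J * (real (card E) * D I J)))"
    unfolding D_def using sq_diff_le_path_sum ps_weight_pos p_nonneg
    by (intro sum_mono mult_left_mono) (auto intro: less_imp_le)
  also have "\<dots> = real (card E) * (\<Sum>I\<in>?W. \<Sum>J\<in>?C0. \<Sum>k<path_length I J.
      ps_weight I * p J * (g (path_state I J (Suc k)) - g (path_state I J k))^2)"
    unfolding D_def by (simp add: sum_distrib_left mult_ac)
  also have "\<dots> = real (card E) * (\<Sum>(I, J, k)\<in>path_steps. ps_weight I * wt w M J / lambda_Ck 0 * (g (path_state I J (Suc k)) - g (path_state I J k))^2)"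
    unfolding path_steps_def p_def using finite_worm_space finite_Ck
    by (simp add: sum.Sigma[symmetric] finite_SigmaI)
  finally show ?thesis .
qed

theorem worm_poincare_inequality: "chain.poincare_inequality (2 * real (card E) * path_congestion)"
  unfolding chain.poincare_inequality_def chain.dirichlet_form_def
proof (intro allI impI)
  fix g :: "'a set set \<Rightarrow> real"
  assume "(\<Sum>x\<in>worm_space V E. ps_weight x * g x) = 0"
  then have "(\<Sum>x\<in>worm_space V E. ps_weight x * (g x)^2)
      \<le> real (card E) * (path_congestion * (\<Sum>x\<in>worm_space V E. \<Sum>y\<in>worm_space V E. ps_weight x * worm_P V E w M x y * (g x - g y)^2))"
    by (rule order_trans[OF sum_sq_le_path_steps mult_left_mono[OF sum_path_steps_le]]) simp
  then show "(\<Sum>x\<in>worm_space V E. ps_weight x * (g x)^2)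
      \<le> 2 * real (card E) * path_congestion * (1 / 2 * (\<Sum>x\<in>worm_space V E. \<Sum>y\<in>worm_space V E. ps_weight x * worm_P V E w M x y * (g x - g y)^2))"
    by (simp add: mult_ac)
qed

lemma card_worm_space_ge_2: "2 \<le> card (worm_space V E)"
proof -
  obtain e where e: "e \<in> E"
    using edges_nonempty by blast
  then have "{{}, {e}} \<subseteq> worm_space V E"
    using bdry_singleton[OF e] card_edge[OF e] by (simp add: worm_space_iff)
  from card_mono[OF finite_worm_space this] show ?thesis
    by simp
qed

lemma relaxation_constant_le:
  assumes "lambda_Ck 2 / lambda_Ck 0 \<le> \<chi>2" and "lambda_Ck 4 / lambda_Ck 0 \<le> \<chi>4"
  shows "2 * real (card E) * path_congestion
    \<le> 8 * \<Delta> * inverse w * real (card E) * ((1 + \<chi>2) * (2 + real (card V)) + 2 * \<chi>4)"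
proof -
  define r2 r4 where "r2 = lambda_Ck 2 / lambda_Ck 0" and "r4 = lambda_Ck 4 / lambda_Ck 0"
  have r_nonneg: "0 \<le> r2" "0 \<le> r4"
    unfolding r2_def r4_def using lambda_Ck_0_pos lambda_Ck_nonneg by auto
  have r_le: "r2 \<le> \<chi>2" "r4 \<le> \<chi>4"
    using assms unfolding r2_def r4_def .
  have "2 * real (card E) * path_congestion = (4 * \<Delta> * real (card E) / w) * (real (card V) * (1 + r2) + 2 * r4)"
    unfolding path_congestion_def r2_def r4_def using lambda_Ck_0_pos w_pos by (simp add: field_simps)
  also have "\<dots> \<le> (4 * \<Delta> * real (card E) / w) * (2 * ((1 + \<chi>2) * (2 + real (card V)) + 2 * \<chi>4))"
  proof (rule mult_left_mono)
    have "real (card V) * (1 + r2) \<le> (1 + \<chi>2) * (2 + real (card V))"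
      using r_le r_nonneg by (subst mult.commute) (intro mult_mono, auto)
    moreover have "0 \<le> (1 + \<chi>2) * (2 + real (card V))"
      using r_le r_nonneg by simp
    ultimately show "real (card V) * (1 + r2) + 2 * r4 \<le> 2 * ((1 + \<chi>2) * (2 + real (card V)) + 2 * \<chi>4)"
      using r_le r_nonneg by (smt (verit))
  qed (use w_pos in simp)
  also have "\<dots> = 8 * \<Delta> * inverse w * real (card E) * ((1 + \<chi>2) * (2 + real (card V)) + 2 * \<chi>4)"
    by (simp add: field_simps)
  finally show ?thesis .
qed

end

theorem theorem1:
  fixes V :: "'a set" and E M :: "'a set set" and w \<chi>2 \<chi>4 :: real
  assumes "simple_graph V E"
    and "E \<noteq> {}"
    and "0 < w" and "w < 1"
    and "M \<subseteq> E"
    and "wtS w M (Ck V E 2) / wtS w M (Ck V E 0) \<le> \<chi>2"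
    and "wtS w M (Ck V E 4) / wtS w M (Ck V E 0) \<le> \<chi>4"
  shows "abs_spectral_gap (worm_space V E) (worm_P V E w M) > 0 \<and>
         relaxation_time (worm_space V E) (worm_P V E w M)
           \<le> 8 * real (max_degree V E) * inverse w * real (card E)
              * ((1 + \<chi>2) * (2 + real (card V)) + 2 * \<chi>4)"
proof -
  interpret worm_chain V E M w
    using assms(1-5) by unfold_locales
  have "0 < 2 * real (card E) * path_congestion"
    using path_congestion_pos edges_nonempty finite_edges by (simp add: card_gt_0_iff)
  then have "0 < abs_spectral_gap (worm_space V E) (worm_P V E w M) \<and>
      relaxation_time (worm_space V E) (worm_P V E w M) \<le> 2 * real (card E) * path_congestion"
    by (rule chain.relaxation_time_le[OF _ worm_poincare_inequality card_worm_space_ge_2])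
  then show ?thesis
    using relaxation_constant_le[OF assms(6,7)] by linarith
qed

end
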